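(* Let $(\mathbf Z_n,\mathbf A_{n\times n})$ be generated from the stochastic block model with parameters $(\pi,\rho_nS)$, with $\rho_n\to0$ and $n\rho_n\to\infty$ as $n\to\infty$. Then for all $\alpha<\min_a\pi_a$ and all $\delta>0$, \[ |X(\hat{\mathbf z}_n,\mathbf Z_n)-X(\mathbf Z_n,\mathbf Z_n)|<\delta\rho_n \] eventually almost surely as $n\to\infty$, for $\hat{\mathbf z}_n=\hat{\mathbf z}_n^{\mathrm{ML}}$ and $\hat{\mathbf z}_n=\hat{\mathbf z}_n^{\mathrm{ICL}}$ (defined with this $\alpha$). Moreover, $\alpha$ can be taken as a decreasing sequence in $n$, provided $n\rho_n>\frac{4s_{\max}}{\alpha^2\delta^2}$ for $n$ sufficiently large.
   Context: SBM with parameters $(\pi,\rho_nS)$: $k\ge2$ fixed; $\pi$ a probability vector on $[k]$ with all $\pi_a>0$; $S$ a fixed symmetric $k\times k$ matrix with strictly positive entries and no two identical columns, $s_{\max}$ its maximal entry; $P=\rho_nS$. $\mathbf Z_n$ i.i.d. with law $\pi$; given $\mathbf Z_n=\mathbf z_n$, $\mathbf A_{n\times n}$ symmetric, zero diagonal, $A_{ij}$ ($i<j$) independent Bernoulli$(P_{z_iz_j})$. For $\mathbf e_n\in[k]^n$: $n_a(\mathbf e_n)=\#\{i:e_i=a\}$; $n_{ab}=n_an_b$ ($a\ne b$), $n_{aa}=n_a(n_a-1)$; $o_{ab}(\mathbf e_n)=\sum_{i,j}\mathbf 1\{e_i=a,e_j=b\}A_{ij}$; $\tau(x)=x\log x+(1-x)\log(1-x)$.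 $Q_{\mathrm{ML}}(\mathbf e_n)=\frac1{2n^2}\sum_{a,b}n_{ab}\tau(o_{ab}/n_{ab})$; with $\tilde o_{aa}=o_{aa}/2,\tilde n_{aa}=n_{aa}/2$, $\tilde o_{ab}=o_{ab},\tilde n_{ab}=n_{ab}$ ($a\ne b$), $Q_{\mathrm{ICL}}(\mathbf e_n)=\frac1{n^2}\sum_{a\le b}\log\frac{B(\tilde o_{ab}+1/2,\tilde n_{ab}-\tilde o_{ab}+1/2)}{B(1/2,1/2)}$. $\mathcal F(n,\alpha)=\{\mathbf e_n:n_a(\mathbf e_n)\ge\alpha n\ \forall a\}$; $\hat{\mathbf z}_n^{\mathrm{ML}}$, $\hat{\mathbf z}_n^{\mathrm{ICL}}$ maximize $Q_{\mathrm{ML}}$, $Q_{\mathrm{ICL}}$ over $\mathcal F(n,\alpha)$. Confusion matrix $R_{ab}(\mathbf e_n,\mathbf z_n)=\frac1n\sum_i\mathbf 1\{e_i=a,z_i=b\}$; for a nonnegative $k\times k$ matrix $R$, $[P_R]_{ab}=\dfrac{[RPR^T]_{ab}-\delta_{ab}\sum_{i}P_{ii}R_{ai}/n}{[R\mathbf 1]_a([R\mathbf 1]_b-\delta_{ab}/n)}$ ($\delta_{ab}=\mathbf 1\{a=b\}$). Finally $X(\mathbf e_n,\mathbf z_n)=\frac1{2n^2}\sum_{a,b}n_{ab}(\mathbf e_n)\bigl[\tau\bigl(o_{ab}(\mathbf e_n)/n_{ab}(\mathbf e_n)\bigr)-\tau\bigl([P_{R(\mathbf e_n,\mathbf z_n)}]_{ab}\bigr)\bigr]$.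 *)

theory Defs
  imports "HOL-Analysis.Analysis" "HOL-Probability.Probability"
begin

(* Blocks are 0..<k, nodes are 0..<n.  Assignments are functions nat => nat
   (extensional on {0..<n}).  Adjacency matrices are nat => nat => bool. *)

definition tau :: "real \<Rightarrow> real" where
  "tau x = x * ln x + (1 - x) * ln (1 - x)"

definition ncount :: "nat \<Rightarrow> (nat \<Rightarrow> nat) \<Rightarrow> nat \<Rightarrow> real" where
  "ncount n e a = real (card {i\<in>{0..<n}. e i = a})"

definition npair :: "nat \<Rightarrow> (nat \<Rightarrow> nat) \<Rightarrow> nat \<Rightarrow> nat \<Rightarrow> real" where
  "npair n e a b = (if a = b then ncount n e a * (ncount n e a - 1)
                    else ncount n e a * ncount n e b)"

definition ocount :: "nat \<Rightarrow> (nat \<Rightarrow> nat \<Rightarrow> bool) \<Rightarrow> (nat \<Rightarrow> nat) \<Rightarrow> nat \<Rightarrow> nat \<Rightarrow> real" where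
  "ocount n A e a b = (\<Sum>i<n. \<Sum>j<n. if e i = a \<and> e j = b \<and> A i j then 1 else 0)"

definition Q_ML :: "nat \<Rightarrow> nat \<Rightarrow> (nat \<Rightarrow> nat \<Rightarrow> bool) \<Rightarrow> (nat \<Rightarrow> nat) \<Rightarrow> real" where
  "Q_ML k n A e = 1 / (2 * real n ^ 2) *
     (\<Sum>a<k. \<Sum>b<k. npair n e a b * tau (ocount n A e a b / npair n e a b))"

definition otilde :: "nat \<Rightarrow> (nat \<Rightarrow> nat \<Rightarrow> bool) \<Rightarrow> (nat \<Rightarrow> nat) \<Rightarrow> nat \<Rightarrow> nat \<Rightarrow> real" where
  "otilde n A e a b = (if a = b then ocount n A e a b / 2 else ocount n A e a b)"

definition ntilde :: "nat \<Rightarrow> (nat \<Rightarrow> nat) \<Rightarrow> nat \<Rightarrow> nat \<Rightarrow> real" where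
  "ntilde n e a b = (if a = b then npair n e a b / 2 else npair n e a b)"

definition Q_ICL :: "nat \<Rightarrow> nat \<Rightarrow> (nat \<Rightarrow> nat \<Rightarrow> bool) \<Rightarrow> (nat \<Rightarrow> nat) \<Rightarrow> real" where
  "Q_ICL k n A e = 1 / real n ^ 2 *
     (\<Sum>(a,b)\<in>{(a,b). a \<le> b \<and> b < k}.
        ln ((Beta :: real \<Rightarrow> real \<Rightarrow> real) (otilde n A e a b + 1/2) (ntilde n e a b - otilde n A e a b + 1/2)
            / (Beta :: real \<Rightarrow> real \<Rightarrow> real) (1/2) (1/2)))"

definition Fset :: "nat \<Rightarrow> nat \<Rightarrow> real \<Rightarrow> (nat \<Rightarrow> nat) set" where
  "Fset k n \<alpha> = {e \<in> {0..<n} \<rightarrow>\<^sub>E {0..<k}. \<forall>a<k. ncount n e a \<ge> \<alpha> * real n}"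

definition is_ML_est :: "nat \<Rightarrow> real \<Rightarrow> nat \<Rightarrow> (nat \<Rightarrow> nat \<Rightarrow> bool) \<Rightarrow> (nat \<Rightarrow> nat) \<Rightarrow> bool" where
  "is_ML_est k \<alpha> n A e \<longleftrightarrow> e \<in> Fset k n \<alpha> \<and> (\<forall>e'\<in>Fset k n \<alpha>. Q_ML k n A e' \<le> Q_ML k n A e)"

definition is_ICL_est :: "nat \<Rightarrow> real \<Rightarrow> nat \<Rightarrow> (nat \<Rightarrow> nat \<Rightarrow> bool) \<Rightarrow> (nat \<Rightarrow> nat) \<Rightarrow> bool" where
  "is_ICL_est k \<alpha> n A e \<longleftrightarrow> e \<in> Fset k n \<alpha> \<and> (\<forall>e'\<in>Fset k n \<alpha>. Q_ICL k n A e' \<le> Q_ICL k n A e)"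

definition Rconf :: "nat \<Rightarrow> (nat \<Rightarrow> nat) \<Rightarrow> (nat \<Rightarrow> nat) \<Rightarrow> nat \<Rightarrow> nat \<Rightarrow> real" where
  "Rconf n e z a b = real (card {i\<in>{0..<n}. e i = a \<and> z i = b}) / real n"

definition PR :: "nat \<Rightarrow> nat \<Rightarrow> (nat \<Rightarrow> nat \<Rightarrow> real) \<Rightarrow> (nat \<Rightarrow> nat \<Rightarrow> real) \<Rightarrow> nat \<Rightarrow> nat \<Rightarrow> real" where
  "PR k n P R a b =
     ((\<Sum>c<k. \<Sum>d<k. R a c * P c d * R b d)
        - (if a = b then (\<Sum>c<k. P c c * R a c) / real n else 0))
     / ((\<Sum>c<k. R a c) * ((\<Sum>c<k. R b c) - (if a = b then 1 / real n else 0)))"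

definition Xfun :: "nat \<Rightarrow> nat \<Rightarrow> (nat \<Rightarrow> nat \<Rightarrow> real) \<Rightarrow> (nat \<Rightarrow> nat \<Rightarrow> bool) \<Rightarrow> (nat \<Rightarrow> nat) \<Rightarrow> (nat \<Rightarrow> nat) \<Rightarrow> real" where
  "Xfun k n P A e z = 1 / (2 * real n ^ 2) *
     (\<Sum>a<k. \<Sum>b<k. npair n e a b *
        (tau (ocount n A e a b / npair n e a b) - tau (PR k n P (Rconf n e z) a b)))"

definition sbm_pmf :: "nat pmf \<Rightarrow> (nat \<Rightarrow> nat \<Rightarrow> real) \<Rightarrow> nat \<Rightarrow> ((nat \<Rightarrow> nat) \<times> (nat \<Rightarrow> nat \<Rightarrow> bool)) pmf" where
  "sbm_pmf \<pi> P n =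
     do { z \<leftarrow> Pi_pmf {0..<n} 0 (\<lambda>_. \<pi>);
          U \<leftarrow> Pi_pmf {(i,j). i < j \<and> j < n} False (\<lambda>(i,j). bernoulli_pmf (P (z i) (z j)));
          return_pmf (z, \<lambda>i j. if i < j then U (i,j) else if j < i then U (j,i) else False) }"

end

theory Submission
  imports Defs
begin

text \<open>Fix a labelling \<open>e\<close> all of whose classes have at least \<open>\<alpha>n\<close> nodes, and write \<open>o\<^sub>a\<^sub>b\<close>,
  \<open>N\<^sub>a\<^sub>b\<close> and \<open>E\<^sub>a\<^sub>b\<close> for the observed number of edges, the number of node pairs, and the
  expected number of edges given \<open>Z\<^sub>n\<close> in block \<open>(a, b)\<close>; then \<open>[P\<^sub>R]\<^sub>a\<^sub>b = E\<^sub>a\<^sub>b / N\<^sub>a\<^sub>b\<close>.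
  Expanding \<open>\<tau>\<close> around \<open>E\<^sub>a\<^sub>b / N\<^sub>a\<^sub>b\<close>, which is of order \<open>\<rho>\<^sub>n\<close>, gives
  \<open>N\<^sub>a\<^sub>b (\<tau>(o\<^sub>a\<^sub>b/N\<^sub>a\<^sub>b) - \<tau>(E\<^sub>a\<^sub>b/N\<^sub>a\<^sub>b)) = (o\<^sub>a\<^sub>b - E\<^sub>a\<^sub>b) ln \<rho>\<^sub>n + O(|o\<^sub>a\<^sub>b - E\<^sub>a\<^sub>b| + (o\<^sub>a\<^sub>b - E\<^sub>a\<^sub>b)\<^sup>2 / (\<rho>\<^sub>n N\<^sub>a\<^sub>b))\<close>.
  Summed over all blocks, the leading terms add up to \<open>ln \<rho>\<^sub>n\<close> times the deviation of the total
  number of edges from its conditional mean, which does not depend on \<open>e\<close>; so they cancel in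
  \<open>X(e, Z\<^sub>n) - X(Z\<^sub>n, Z\<^sub>n)\<close>. Bernstein's inequality and a union bound over the \<open>k\<^sup>n\<close> labellings,
  which \<open>n\<rho>\<^sub>n \<rightarrow> \<infinity>\<close> makes summable, show by Borel--Cantelli that almost surely, for all
  large \<open>n\<close>, \<open>|o\<^sub>a\<^sub>b - E\<^sub>a\<^sub>b| \<le> \<gamma>\<rho>\<^sub>n n \<surd>N\<^sub>a\<^sub>b\<close> for all such \<open>e\<close> at once, including \<open>Z\<^sub>n\<close>
  (whose classes have at least \<open>n min\<^sub>a \<pi>\<^sub>a / 2\<close> nodes eventually); the remainders are then
  \<open>O((\<gamma> + \<gamma>\<^sup>2) \<rho>\<^sub>n)\<close>.\<close>

section \<open>Elementary inequalities\<close>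

lemma exp_le_one_plus_self_plus_square:
  fixes y :: real
  assumes "y \<le> 1"
  shows "exp y \<le> 1 + y + y\<^sup>2"
proof (cases "0 \<le> y")
  case True
  then show ?thesis using assms by (rule exp_bound)
next
  case False
  have "exp y = inverse (exp (- y))" by (simp add: exp_minus)
  also have "\<dots> \<le> inverse (1 - y)"
    using False exp_ge_add_one_self[of "- y"] by (intro le_imp_inverse_le) auto
  also have "\<dots> \<le> 1 + y + y\<^sup>2"
  proof -
    have "(1 - y) * (1 + y + y\<^sup>2) = 1 - y ^ 3"
      by (simp add: algebra_simps power2_eq_square power3_eq_cube)
    moreover have "y ^ 3 \<le> 0" using False by (simp add: power_le_zero_eq)
    ultimately show ?thesis using False by (simp add: inverse_eq_divide divide_le_eq mult.commute)
  qed
  finally show ?thesis .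
qed

lemma bernoulli_centered_mgf_le:
  fixes p c :: real
  assumes "0 \<le> p" "p \<le> 1" "\<bar>c\<bar> \<le> 1"
  shows "measure_pmf.expectation (bernoulli_pmf p) (\<lambda>b. exp (c * (of_bool b - p))) \<le> exp (c\<^sup>2 * p)"
proof -
  have bound: "exp (c * (x - p)) \<le> 1 + c * (x - p) + c\<^sup>2 * (x - p)\<^sup>2" if "0 \<le> x" "x \<le> 1" for x
  proof -
    have "\<bar>c * (x - p)\<bar> \<le> 1" using assms that by (auto simp: abs_mult intro: mult_le_one)
    then show ?thesis using exp_le_one_plus_self_plus_square[of "c * (x - p)"] by (simp add: power_mult_distrib)
  qed
  have "measure_pmf.expectation (bernoulli_pmf p) (\<lambda>b. exp (c * (of_bool b - p)))
      = p * exp (c * (1 - p)) + (1 - p) * exp (c * (0 - p))"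
    using assms by simp
  also have "\<dots> \<le> p * (1 + c * (1 - p) + c\<^sup>2 * (1 - p)\<^sup>2) + (1 - p) * (1 + c * (0 - p) + c\<^sup>2 * (0 - p)\<^sup>2)"
    using assms bound[of 1] bound[of 0] by (intro add_mono mult_left_mono) auto
  also have "\<dots> = 1 + c\<^sup>2 * p * (1 - p)" by (simp add: power2_eq_square algebra_simps)
  also have "\<dots> \<le> 1 + c\<^sup>2 * p" using assms by (simp add: mult_left_le)
  also have "\<dots> \<le> exp (c\<^sup>2 * p)" by (rule exp_ge_add_one_self)
  finally show ?thesis .
qed

lemma mult_ln_ratio_bounds:
  fixes u v :: real
  assumes "0 \<le> u" "0 < v"
  shows "u - v \<le> u * (ln u - ln v)" and "u * (ln u - ln v) \<le> u * (u / v - 1)"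
proof -
  have "u - v \<le> u * (ln u - ln v) \<and> u * (ln u - ln v) \<le> u * (u / v - 1)"
  proof (cases "u = 0")
    case False
    then have "0 < u" using assms by simp
    have "ln v - ln u \<le> v / u - 1" "ln u - ln v \<le> u / v - 1"
      using \<open>0 < u\<close> assms ln_le_minus_one[of "v / u"] ln_le_minus_one[of "u / v"] by (simp_all add: ln_div)
    then have "u * (ln v - ln u) \<le> v - u" "u * (ln u - ln v) \<le> u * (u / v - 1)"
      using \<open>0 < u\<close> by (auto simp: field_simps dest: mult_left_mono[of _ _ u])
    then show ?thesis by (simp add: algebra_simps)
  qed (use assms in simp)
  then show "u - v \<le> u * (ln u - ln v)" and "u * (ln u - ln v) \<le> u * (u / v - 1)" by simp_all
qed

text \<open>The remainder is the Kullback--Leibler divergence between Bernoulli laws; it is bounded by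
  the \<open>\<chi>\<^sup>2\<close>-divergence.\<close>

lemma tau_tangent_remainder_bounds:
  fixes x p :: real
  assumes "0 \<le> x" "x \<le> 1" "0 < p" "p < 1"
  defines "K \<equiv> tau x - tau p - (x - p) * (ln p - ln (1 - p))"
  shows "0 \<le> K" and "K \<le> (x - p)\<^sup>2 / (p * (1 - p))"
proof -
  have K: "K = x * (ln x - ln p) + (1 - x) * (ln (1 - x) - ln (1 - p))"
    unfolding K_def tau_def by (simp add: algebra_simps)
  note lo = mult_ln_ratio_bounds(1) and hi = mult_ln_ratio_bounds(2)
  show "0 \<le> K"
    using lo[of x p] lo[of "1 - x" "1 - p"] assms(1-4) unfolding K by simp
  have "x * (x / p - 1) + (1 - x) * ((1 - x) / (1 - p) - 1) = (x - p)\<^sup>2 / (p * (1 - p))"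
    using assms(3,4) by (simp add: field_simps power2_eq_square)
  then show "K \<le> (x - p)\<^sup>2 / (p * (1 - p))"
    using hi[of x p] hi[of "1 - x" "1 - p"] assms(1-4) unfolding K by simp
qed

lemma Pi_pmf_bernoulli_sum_mgf_le:
  fixes Q :: "'a \<Rightarrow> 'b pmf" and h :: "'a \<Rightarrow> 'b \<Rightarrow> bool" and p w :: "'a \<Rightarrow> real" and l :: real
  assumes fin: "finite I"
    and law: "\<And>x. x \<in> I \<Longrightarrow> map_pmf (h x) (Q x) = bernoulli_pmf (p x)"
    and p: "\<And>x. x \<in> I \<Longrightarrow> 0 \<le> p x \<and> p x \<le> 1"
    and lw: "\<And>x. x \<in> I \<Longrightarrow> \<bar>l * w x\<bar> \<le> 1"
  shows "integrable (Pi_pmf I d Q) (\<lambda>U. exp (l * (\<Sum>x\<in>I. w x * (of_bool (h x (U x)) - p x))))"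
    and "measure_pmf.expectation (Pi_pmf I d Q) (\<lambda>U. exp (l * (\<Sum>x\<in>I. w x * (of_bool (h x (U x)) - p x))))
         \<le> exp (l\<^sup>2 * (\<Sum>x\<in>I. (w x)\<^sup>2 * p x))"
proof -
  define f where "f x = (\<lambda>v. exp (l * w x * (of_bool (h x v) - p x)))" for x
  have G: "exp (l * (\<Sum>x\<in>I. w x * (of_bool (h x (U x)) - p x))) = (\<Prod>x\<in>I. f x (U x))" for U
    unfolding f_def using fin by (simp add: exp_sum sum_distrib_left mult_ac)
  have int_f: "integrable (measure_pmf (Q x)) (f x)" if "x \<in> I" for x
  proof -
    have "integrable (map_pmf (h x) (Q x)) (\<lambda>b. exp (l * w x * (of_bool b - p x)))"
      using law[OF that] by (simp add: integrable_measure_pmf_finite)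
    then show ?thesis by (simp add: f_def)
  qed
  then show "integrable (Pi_pmf I d Q) (\<lambda>U. exp (l * (\<Sum>x\<in>I. w x * (of_bool (h x (U x)) - p x))))"
    unfolding G by (rule integrable_prod_Pi_pmf[OF fin])
  have E_f: "measure_pmf.expectation (Q x) (f x) \<le> exp (l\<^sup>2 * ((w x)\<^sup>2 * p x))" if "x \<in> I" for x
  proof -
    have "measure_pmf.expectation (Q x) (f x)
        = measure_pmf.expectation (bernoulli_pmf (p x)) (\<lambda>b. exp (l * w x * (of_bool b - p x)))"
      unfolding f_def law[OF that, symmetric] by simp
    also have "\<dots> \<le> exp ((l * w x)\<^sup>2 * p x)"
      using p[OF that] lw[OF that] by (intro bernoulli_centered_mgf_le) auto
    finally show ?thesis by (simp add: power_mult_distrib mult_ac)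
  qed
  have "measure_pmf.expectation (Pi_pmf I d Q) (\<lambda>U. \<Prod>x\<in>I. f x (U x))
      = (\<Prod>x\<in>I. measure_pmf.expectation (Q x) (f x))"
    by (rule expectation_prod_Pi_pmf[OF fin int_f]) (simp_all add: f_def)
  also have "\<dots> \<le> (\<Prod>x\<in>I. exp (l\<^sup>2 * ((w x)\<^sup>2 * p x)))"
    by (intro prod_mono conjI E_f integral_nonneg_AE AE_pmfI) (auto simp: f_def)
  also have "\<dots> = exp (l\<^sup>2 * (\<Sum>x\<in>I. (w x)\<^sup>2 * p x))"
    using fin by (simp add: exp_sum sum_distrib_left)
  finally show "measure_pmf.expectation (Pi_pmf I d Q) (\<lambda>U. exp (l * (\<Sum>x\<in>I. w x * (of_bool (h x (U x)) - p x))))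
      \<le> exp (l\<^sup>2 * (\<Sum>x\<in>I. (w x)\<^sup>2 * p x))"
    unfolding G .
qed

lemma Pi_pmf_bernoulli_sum_upper_tail:
  fixes Q :: "'a \<Rightarrow> 'b pmf" and h :: "'a \<Rightarrow> 'b \<Rightarrow> bool" and p w :: "'a \<Rightarrow> real" and l t :: real
  assumes fin: "finite I"
    and law: "\<And>x. x \<in> I \<Longrightarrow> map_pmf (h x) (Q x) = bernoulli_pmf (p x)"
    and p: "\<And>x. x \<in> I \<Longrightarrow> 0 \<le> p x \<and> p x \<le> 1"
    and l: "0 < l" and lw: "\<And>x. x \<in> I \<Longrightarrow> \<bar>l * w x\<bar> \<le> 1"
  shows "measure_pmf.prob (Pi_pmf I d Q) {U. t \<le> (\<Sum>x\<in>I. w x * (of_bool (h x (U x)) - p x))}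
         \<le> exp (l\<^sup>2 * (\<Sum>x\<in>I. (w x)\<^sup>2 * p x) - l * t)"
proof -
  define G where "G U = exp (l * (\<Sum>x\<in>I. w x * (of_bool (h x (U x)) - p x)))" for U
  note mgf = Pi_pmf_bernoulli_sum_mgf_le[where I = I and Q = Q and h = h and p = p and w = w and l = l
      and d = d, OF fin law p lw, folded G_def]
  have "measure_pmf.prob (Pi_pmf I d Q) {U. t \<le> (\<Sum>x\<in>I. w x * (of_bool (h x (U x)) - p x))}
      \<le> measure_pmf.prob (Pi_pmf I d Q) {U \<in> space (measure_pmf (Pi_pmf I d Q)). exp (l * t) \<le> G U}"
    using l by (intro measure_pmf.finite_measure_mono) (auto simp: G_def)
  also have "\<dots> \<le> measure_pmf.expectation (Pi_pmf I d Q) G / exp (l * t)"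
    using mgf(1) by (intro integral_Markov_inequality_measure[where A = UNIV]) (auto simp: G_def)
  also have "\<dots> \<le> exp (l\<^sup>2 * (\<Sum>x\<in>I. (w x)\<^sup>2 * p x)) / exp (l * t)"
    using mgf(2) by (simp add: divide_right_mono)
  finally show ?thesis by (simp add: exp_diff)
qed

lemma exists_bernstein_exponent:
  fixes t V :: real
  assumes "0 < t" "0 < V"
  obtains l where "0 < l" "l \<le> 1/2" "l\<^sup>2 * V - l * t \<le> - min (t\<^sup>2 / (4 * V)) (t / 4)"
proof (cases "t \<le> V")
  case True
  show ?thesis
  proof
    show "0 < t / (2 * V)" "t / (2 * V) \<le> 1/2" using True assms by auto
    have "(t / (2 * V))\<^sup>2 * V - t / (2 * V) * t = - (t\<^sup>2 / (4 * V))"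
      using assms by (simp add: field_simps power2_eq_square)
    then show "(t / (2 * V))\<^sup>2 * V - t / (2 * V) * t \<le> - min (t\<^sup>2 / (4 * V)) (t / 4)" by simp
  qed
next
  case False
  show ?thesis
  proof
    show "(1/2::real)\<^sup>2 * V - 1/2 * t \<le> - min (t\<^sup>2 / (4 * V)) (t / 4)"
      using False by (simp add: power2_eq_square)
  qed auto
qed

text \<open>Bernstein's inequality; the lower tail is the upper tail for the weights \<open>-w\<close>.\<close>

lemma Pi_pmf_bernoulli_sum_deviation:
  fixes Q :: "'a \<Rightarrow> 'b pmf" and h :: "'a \<Rightarrow> 'b \<Rightarrow> bool" and p w :: "'a \<Rightarrow> real" and t V :: real
  assumes fin: "finite I"
    and law: "\<And>x. x \<in> I \<Longrightarrow> map_pmf (h x) (Q x) = bernoulli_pmf (p x)"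
    and p: "\<And>x. x \<in> I \<Longrightarrow> 0 \<le> p x \<and> p x \<le> 1"
    and w: "\<And>x. x \<in> I \<Longrightarrow> \<bar>w x\<bar> \<le> 2"
    and V: "(\<Sum>x\<in>I. (w x)\<^sup>2 * p x) \<le> V" "0 < V" and t: "0 < t"
  shows "measure_pmf.prob (Pi_pmf I d Q) {U. t < \<bar>\<Sum>x\<in>I. w x * (of_bool (h x (U x)) - p x)\<bar>}
         \<le> 2 * exp (- min (t\<^sup>2 / (4 * V)) (t / 4))"
proof -
  define D where "D U = (\<Sum>x\<in>I. w x * (of_bool (h x (U x)) - p x))" for U
  obtain l where l: "0 < l" "l \<le> 1/2" and exponent: "l\<^sup>2 * V - l * t \<le> - min (t\<^sup>2 / (4 * V)) (t / 4)"
    using exists_bernstein_exponent[OF t V(2)] by blast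
  have lw: "\<bar>l * w x\<bar> \<le> 1" "\<bar>l * - w x\<bar> \<le> 1" if "x \<in> I" for x
    using l w[OF that] mult_mono[of l "1/2" "\<bar>w x\<bar>" 2] by (auto simp: abs_mult)
  have tail: "measure_pmf.prob (Pi_pmf I d Q) {U. t \<le> (\<Sum>x\<in>I. v x * (of_bool (h x (U x)) - p x))}
      \<le> exp (- min (t\<^sup>2 / (4 * V)) (t / 4))" if "v = w \<or> v = (\<lambda>x. - w x)" for v
  proof -
    have "measure_pmf.prob (Pi_pmf I d Q) {U. t \<le> (\<Sum>x\<in>I. v x * (of_bool (h x (U x)) - p x))}
        \<le> exp (l\<^sup>2 * (\<Sum>x\<in>I. (v x)\<^sup>2 * p x) - l * t)"
      using that lw by (intro Pi_pmf_bernoulli_sum_upper_tail fin law p l) auto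
    also have "\<dots> \<le> exp (l\<^sup>2 * V - l * t)"
      using that V(1) by (auto intro: mult_left_mono)
    finally show ?thesis using exponent by (meson exp_le_cancel_iff order_trans)
  qed
  have "{U. t < \<bar>D U\<bar>} \<subseteq> {U. t \<le> D U} \<union> {U. t \<le> (\<Sum>x\<in>I. - w x * (of_bool (h x (U x)) - p x))}"
    by (auto simp: D_def sum_negf)
  then have "measure_pmf.prob (Pi_pmf I d Q) {U. t < \<bar>D U\<bar>}
      \<le> measure_pmf.prob (Pi_pmf I d Q) ({U. t \<le> D U} \<union> {U. t \<le> (\<Sum>x\<in>I. - w x * (of_bool (h x (U x)) - p x))})"
    by (intro measure_pmf.finite_measure_mono) auto
  also have "\<dots> \<le> measure_pmf.prob (Pi_pmf I d Q) {U. t \<le> D U}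
        + measure_pmf.prob (Pi_pmf I d Q) {U. t \<le> (\<Sum>x\<in>I. - w x * (of_bool (h x (U x)) - p x))}"
    by (rule measure_Un_le) auto
  also have "\<dots> \<le> 2 * exp (- min (t\<^sup>2 / (4 * V)) (t / 4))"
    using tail[of w] tail[of "\<lambda>x. - w x"] unfolding D_def by simp
  finally show ?thesis unfolding D_def .
qed

section \<open>Block sums and expected edge counts\<close>

definition block_sum :: "nat \<Rightarrow> (nat \<Rightarrow> nat) \<Rightarrow> nat \<Rightarrow> nat \<Rightarrow> (nat \<Rightarrow> nat \<Rightarrow> real) \<Rightarrow> real" where
  "block_sum n e a b F = (\<Sum>i<n. \<Sum>j<n. of_bool (e i = a \<and> e j = b) * F i j)"

lemma block_sum_add: "block_sum n e a b (\<lambda>i j. F i j + G i j) = block_sum n e a b F + block_sum n e a b G"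
  unfolding block_sum_def by (simp add: sum.distrib distrib_left)

lemma block_sum_diff: "block_sum n e a b (\<lambda>i j. F i j - G i j) = block_sum n e a b F - block_sum n e a b G"
  unfolding block_sum_def by (simp add: sum_subtractf right_diff_distrib)

lemma block_sum_cmult: "block_sum n e a b (\<lambda>i j. c * F i j) = c * block_sum n e a b F"
  unfolding block_sum_def sum_distrib_left by (simp only: mult.left_commute)

lemma block_sum_mono:
  "(\<And>i j. i < n \<Longrightarrow> j < n \<Longrightarrow> F i j \<le> G i j) \<Longrightarrow> block_sum n e a b F \<le> block_sum n e a b G"
  unfolding block_sum_def by (intro sum_mono mult_left_mono) auto

lemma block_sum_cong:
  "(\<And>i. i < n \<Longrightarrow> e i = e' i) \<Longrightarrow> block_sum n e a b F = block_sum n e' a b F"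
  unfolding block_sum_def by (intro sum.cong) auto

lemma block_sum_split_diagonal:
  "block_sum n e a b F = block_sum n e a b (\<lambda>i j. if i = j then 0 else F i j)
     + (if a = b then \<Sum>i<n. of_bool (e i = a) * F i i else 0)"
proof -
  have "(\<Sum>j<n. of_bool (e i = a \<and> e j = b) * (if i = j then F i j else 0))
      = of_bool (e i = a \<and> e i = b) * F i i" if "i < n" for i
    using that by (simp add: if_distrib[of "\<lambda>x. _ * x"] sum.delta cong: if_cong)
  then have "block_sum n e a b (\<lambda>i j. if i = j then F i j else 0)
      = (if a = b then \<Sum>i<n. of_bool (e i = a) * F i i else 0)"
    unfolding block_sum_def by (cases "a = b") (auto intro: sum.cong sum.neutral)
  moreover have "block_sum n e a b F
      = block_sum n e a b (\<lambda>i j. (if i = j then 0 else F i j) + (if i = j then F i j else 0))"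
    by (rule arg_cong[where f = "block_sum n e a b"]) (simp add: fun_eq_iff)
  ultimately show ?thesis by (simp only: block_sum_add)
qed

lemma sum_block_sum:
  assumes "\<And>i. i < n \<Longrightarrow> e i < k"
  shows "(\<Sum>a<k. \<Sum>b<k. block_sum n e a b F) = (\<Sum>i<n. \<Sum>j<n. F i j)"
proof -
  have "(\<Sum>a<k. \<Sum>b<k. block_sum n e a b F)
      = (\<Sum>i<n. \<Sum>j<n. \<Sum>a<k. \<Sum>b<k. of_bool (e i = a \<and> e j = b) * F i j)"
    unfolding block_sum_def by (simp only: sum.swap[where A = "{..<k}" and B = "{..<n}"])
  also have "\<dots> = (\<Sum>i<n. \<Sum>j<n. F i j)"
    using assms by (intro sum.cong refl) (simp add: of_bool_conj mult.assoc flip: sum_distrib_left)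
  finally show ?thesis .
qed

lemma ncount_eq_sum: "ncount n e a = (\<Sum>i<n. of_bool (e i = a))"
  unfolding ncount_def by (simp add: lessThan_atLeast0 Int_def)

lemma npair_eq_block_sum: "npair n e a b = block_sum n e a b (\<lambda>i j. if i = j then 0 else 1)"
proof -
  have "block_sum n e a b (\<lambda>_ _. 1) = ncount n e a * ncount n e b"
    unfolding block_sum_def ncount_eq_sum sum_product by (simp add: of_bool_conj)
  then show ?thesis
    using block_sum_split_diagonal[of n e a b "\<lambda>_ _. 1"]
    by (cases "a = b") (simp_all add: npair_def ncount_eq_sum algebra_simps del: sum_of_bool_eq)
qed

lemma ocount_eq_block_sum: "ocount n A e a b = block_sum n e a b (\<lambda>i j. of_bool (A i j))"
  unfolding ocount_def block_sum_def by (intro sum.cong) auto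

lemma block_sum_nonneg:
  "(\<And>i j. i < n \<Longrightarrow> j < n \<Longrightarrow> 0 \<le> F i j) \<Longrightarrow> 0 \<le> block_sum n e a b F"
  unfolding block_sum_def by (intro sum_nonneg) auto

lemma npair_nonneg: "0 \<le> npair n e a b"
  unfolding npair_eq_block_sum by (rule block_sum_nonneg) simp

lemma npair_le_square: "npair n e a b \<le> (real n)\<^sup>2"
proof -
  have "card {i \<in> {0..<n}. e i = c} \<le> card {0..<n}" for c
    by (rule card_mono) auto
  then have "ncount n e c \<le> real n" for c
    by (simp add: ncount_def)
  then have "ncount n e a * ncount n e b \<le> real n * real n"
    by (intro mult_mono) (auto simp: ncount_def)
  moreover have "npair n e a b \<le> ncount n e a * ncount n e b"
    by (simp add: npair_def ncount_def mult_left_mono)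
  ultimately show ?thesis by (simp add: power2_eq_square)
qed

lemma ocount_bounds:
  assumes "\<And>i. \<not> A i i"
  shows "0 \<le> ocount n A e a b" and "ocount n A e a b \<le> npair n e a b"
  unfolding ocount_eq_block_sum npair_eq_block_sum using assms
  by (auto intro!: block_sum_nonneg block_sum_mono)

text \<open>For an edge-probability matrix \<open>P\<close>, this is the conditional expectation of
  \<^term>\<open>ocount n A e a b\<close> given the labels \<open>z\<close>.\<close>

definition expected_ocount :: "nat \<Rightarrow> (nat \<Rightarrow> nat \<Rightarrow> real) \<Rightarrow> (nat \<Rightarrow> nat) \<Rightarrow> (nat \<Rightarrow> nat) \<Rightarrow> nat \<Rightarrow> nat \<Rightarrow> real" where
  "expected_ocount n P e z a b = block_sum n e a b (\<lambda>i j. if i = j then 0 else P (z i) (z j))"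

lemma expected_ocount_bounds:
  assumes "\<And>i j. i < n \<Longrightarrow> j < n \<Longrightarrow> L \<le> P (z i) (z j) \<and> P (z i) (z j) \<le> U"
  shows "L * npair n e a b \<le> expected_ocount n P e z a b"
    and "expected_ocount n P e z a b \<le> U * npair n e a b"
  unfolding npair_eq_block_sum expected_ocount_def block_sum_cmult[symmetric]
  using assms by (auto intro!: block_sum_mono)

lemma Rconf_weighted_row_sum:
  assumes "\<And>i. i < n \<Longrightarrow> z i < k"
  shows "(\<Sum>c<k. Rconf n e z a c * h c) = (\<Sum>i<n. of_bool (e i = a) * h (z i)) / real n"
proof -
  have "Rconf n e z a c = (\<Sum>i<n. of_bool (e i = a) * of_bool (z i = c)) / real n" for c
    unfolding Rconf_def by (simp add: lessThan_atLeast0 Int_def flip: of_bool_conj)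
  then have "(\<Sum>c<k. Rconf n e z a c * h c)
      = (\<Sum>i<n. of_bool (e i = a) * (\<Sum>c<k. of_bool (z i = c) * h c)) / real n"
    by (simp add: sum_divide_distrib sum_distrib_left sum_distrib_right mult.assoc sum.swap[where A = "{..<k}"]
        del: sum_mult_of_bool_eq sum_of_bool_mult_eq)
  also have "\<dots> = (\<Sum>i<n. of_bool (e i = a) * h (z i)) / real n"
    using assms by (intro arg_cong[where f = "\<lambda>x. x / real n"] sum.cong) simp_all
  finally show ?thesis .
qed

lemma Rconf_quadratic_form:
  assumes z: "\<And>i. i < n \<Longrightarrow> z i < k"
  shows "(\<Sum>c<k. \<Sum>d<k. Rconf n e z a c * P c d * Rconf n e z b d)
       = block_sum n e a b (\<lambda>i j. P (z i) (z j)) / (real n)\<^sup>2"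
proof -
  have "(\<Sum>c<k. \<Sum>d<k. Rconf n e z a c * P c d * Rconf n e z b d)
      = (\<Sum>c<k. Rconf n e z a c * (\<Sum>d<k. Rconf n e z b d * P c d))"
    by (simp add: sum_distrib_left mult_ac)
  also have "\<dots> = (\<Sum>c<k. Rconf n e z a c * ((\<Sum>j<n. of_bool (e j = b) * P c (z j)) / real n))"
    by (simp only: Rconf_weighted_row_sum[OF z])
  also have "\<dots> = (\<Sum>i<n. of_bool (e i = a) * ((\<Sum>j<n. of_bool (e j = b) * P (z i) (z j)) / real n)) / real n"
    by (rule Rconf_weighted_row_sum[OF z])
  also have "\<dots> = block_sum n e a b (\<lambda>i j. P (z i) (z j)) / (real n)\<^sup>2"
    unfolding block_sum_def
    by (simp add: power2_eq_square sum_divide_distrib sum_distrib_left of_bool_conj mult_ac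
        del: sum_mult_of_bool_eq sum_of_bool_mult_eq)
  finally show ?thesis .
qed

lemma PR_Rconf_eq:
  assumes n: "0 < n" and z: "\<And>i. i < n \<Longrightarrow> z i < k"
  shows "PR k n P (Rconf n e z) a b = expected_ocount n P e z a b / npair n e a b"
proof -
  have quadratic: "(\<Sum>c<k. \<Sum>d<k. Rconf n e z a c * P c d * Rconf n e z b d)
      = block_sum n e a b (\<lambda>i j. P (z i) (z j)) / (real n)\<^sup>2"
    using z by (rule Rconf_quadratic_form)
  have diagonal: "(\<Sum>c<k. P c c * Rconf n e z a c) = (\<Sum>i<n. of_bool (e i = a) * P (z i) (z i)) / real n"
    using Rconf_weighted_row_sum[OF z, where e = e and a = a and h = "\<lambda>c. P c c"] by (simp add: mult.commute)
  have rows: "(\<Sum>c<k. Rconf n e z c' c) = ncount n e c' / real n" for c'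
    using Rconf_weighted_row_sum[OF z, where e = e and a = c' and h = "\<lambda>_. 1"] by (simp add: ncount_eq_sum del: sum_of_bool_eq)
  have "PR k n P (Rconf n e z) a b
      = (expected_ocount n P e z a b / (real n)\<^sup>2) / (npair n e a b / (real n)\<^sup>2)"
    unfolding PR_def quadratic diagonal rows expected_ocount_def
      block_sum_split_diagonal[of n e a b "\<lambda>i j. P (z i) (z j)"]
    using n by (cases "a = b") (simp_all add: npair_def field_simps power2_eq_square)
  then show ?thesis using n by simp
qed

section \<open>Linearization of the profile likelihood\<close>

lemma abs_ln_ratio_minus_ln_one_minus_le:
  fixes p \<rho> smin smax :: real
  assumes "\<rho> * smin \<le> p" "p \<le> \<rho> * smax" "0 < p" "p \<le> 1/2" "0 < \<rho>" "0 < smin"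
  shows "\<bar>ln (p / \<rho>) - ln (1 - p)\<bar> \<le> \<bar>ln smin\<bar> + \<bar>ln smax\<bar> + ln 2"
proof -
  have "smin \<le> p / \<rho>" "p / \<rho> \<le> smax" using assms by (simp_all add: field_simps)
  then have "ln smin \<le> ln (p / \<rho>)" "ln (p / \<rho>) \<le> ln smax"
    using assms by (auto intro!: ln_mono)
  moreover have "- ln 2 \<le> ln (1 - p)" "ln (1 - p) \<le> 0"
    using assms ln_le_cancel_iff[of "1/2" "1 - p"] by (simp_all add: ln_div)
  ultimately show ?thesis by linarith
qed

lemma tau_linearization_error:
  fixes N obs E \<rho> smin smax :: real
  assumes N: "0 < N" and obs: "0 \<le> obs" "obs \<le> N"
    and E: "\<rho> * smin * N \<le> E" "E \<le> \<rho> * smax * N"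
    and \<rho>: "0 < \<rho>" and smin: "0 < smin" and half: "\<rho> * smax \<le> 1/2"
  shows "\<bar>N * (tau (obs / N) - tau (E / N)) - (obs - E) * ln \<rho>\<bar>
         \<le> (\<bar>ln smin\<bar> + \<bar>ln smax\<bar> + ln 2) * \<bar>obs - E\<bar> + 2 * (obs - E)\<^sup>2 / (\<rho> * smin * N)"
proof -
  define x p where "x = obs / N" and "p = E / N"
  have x: "0 \<le> x" "x \<le> 1" using N obs by (auto simp: x_def)
  have p: "\<rho> * smin \<le> p" "p \<le> \<rho> * smax" using N E by (auto simp: p_def field_simps)
  have p0: "0 < p" using p(1) \<rho> smin by (meson mult_pos_pos order_less_le_trans)
  have p1: "p \<le> 1/2" using p(2) half by linarith
  define K where "K = tau x - tau p - (x - p) * (ln p - ln (1 - p))"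
  have K: "0 \<le> K" "K \<le> (x - p)\<^sup>2 / (p * (1 - p))"
    using tau_tangent_remainder_bounds[OF x p0] p1 unfolding K_def by auto
  have D: "obs - E = N * (x - p)" using N by (simp add: x_def p_def field_simps)
  have split: "N * (tau x - tau p) - (obs - E) * ln \<rho> = (obs - E) * (ln (p / \<rho>) - ln (1 - p)) + N * K"
    using p0 \<rho> by (simp add: K_def D ln_div algebra_simps)
  have "\<bar>ln (p / \<rho>) - ln (1 - p)\<bar> \<le> \<bar>ln smin\<bar> + \<bar>ln smax\<bar> + ln 2"
    using p p0 p1 \<rho> smin by (rule abs_ln_ratio_minus_ln_one_minus_le)
  then have linear: "\<bar>(obs - E) * (ln (p / \<rho>) - ln (1 - p))\<bar> \<le> (\<bar>ln smin\<bar> + \<bar>ln smax\<bar> + ln 2) * \<bar>obs - E\<bar>"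
    by (simp add: abs_mult mult.commute mult_left_mono)
  have "N * K \<le> N * ((x - p)\<^sup>2 / (p * (1 - p)))" using K N by (intro mult_left_mono) auto
  also have "\<dots> = (obs - E)\<^sup>2 / (N * (p * (1 - p)))" using N by (simp add: D power2_eq_square)
  also have "\<dots> \<le> (obs - E)\<^sup>2 / (N * (\<rho> * smin / 2))"
  proof (rule divide_left_mono)
    have "p * (1/2) \<le> p * (1 - p)" using p0 p1 by (intro mult_left_mono) auto
    then have "\<rho> * smin / 2 \<le> p * (1 - p)" using p(1) by linarith
    then show "N * (\<rho> * smin / 2) \<le> N * (p * (1 - p))" using N by (intro mult_left_mono) auto
    show "0 < N * (p * (1 - p)) * (N * (\<rho> * smin / 2))" using N p0 p1 \<rho> smin by simp
  qed simp
  also have "\<dots> = 2 * (obs - E)\<^sup>2 / (\<rho> * smin * N)" by (simp add: field_simps)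
  finally have "N * K \<le> 2 * (obs - E)\<^sup>2 / (\<rho> * smin * N)" .
  with split linear K(1) N show ?thesis
    unfolding x_def p_def by (smt (verit) mult_nonneg_nonneg)
qed

lemma block_term_linearization_error:
  fixes \<rho> smin smax \<epsilon> :: real
  assumes n: "0 < n" and \<rho>: "0 < \<rho>" and smin: "0 < smin" and half: "\<rho> * smax \<le> 1/2"
    and S: "\<And>c d. c < k \<Longrightarrow> d < k \<Longrightarrow> smin \<le> S c d \<and> S c d \<le> smax"
    and z: "\<And>i. i < n \<Longrightarrow> z i < k" and A: "\<And>i. \<not> A i i" and \<epsilon>: "0 \<le> \<epsilon>"
    and dev: "\<bar>ocount n A e a b - expected_ocount n (\<lambda>c d. \<rho> * S c d) e z a b\<bar> \<le> \<epsilon> * sqrt (npair n e a b)"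
  shows "\<bar>npair n e a b * (tau (ocount n A e a b / npair n e a b)
              - tau (PR k n (\<lambda>c d. \<rho> * S c d) (Rconf n e z) a b))
           - (ocount n A e a b - expected_ocount n (\<lambda>c d. \<rho> * S c d) e z a b) * ln \<rho>\<bar>
         \<le> (\<bar>ln smin\<bar> + \<bar>ln smax\<bar> + ln 2) * \<epsilon> * real n + 2 * \<epsilon>\<^sup>2 / (\<rho> * smin)"
proof -
  define N obs E where "N = npair n e a b" and "obs = ocount n A e a b"
    and "E = expected_ocount n (\<lambda>c d. \<rho> * S c d) e z a b"
  have obs: "0 \<le> obs" "obs \<le> N" unfolding obs_def N_def using A by (rule ocount_bounds)+
  have E: "\<rho> * smin * N \<le> E" "E \<le> \<rho> * smax * N"
    unfolding E_def N_def using S z \<rho>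
    by (auto intro!: expected_ocount_bounds[where L = "\<rho> * smin" and U = "\<rho> * smax"])
  have rhs_nonneg: "0 \<le> (\<bar>ln smin\<bar> + \<bar>ln smax\<bar> + ln 2) * \<epsilon> * real n + 2 * \<epsilon>\<^sup>2 / (\<rho> * smin)"
    using \<epsilon> \<rho> smin by simp
  show ?thesis
  proof (cases "N = 0")
    case True
    then have "obs = 0" "E = 0" using obs E \<rho> smin by auto
    then show ?thesis using True rhs_nonneg unfolding N_def obs_def E_def by simp
  next
    case False
    then have N: "0 < N" using npair_nonneg[of n e a b] by (simp add: N_def)
    have "\<bar>obs - E\<bar> \<le> \<epsilon> * real n"
    proof -
      have "sqrt N \<le> real n"
        using npair_le_square[of n e a b] by (simp add: N_def real_le_lsqrt)
      then show ?thesis using dev \<epsilon> unfolding obs_def E_def N_def[symmetric] by (meson mult_left_mono order_trans)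
    qed
    moreover have "2 * (obs - E)\<^sup>2 / (\<rho> * smin * N) \<le> 2 * \<epsilon>\<^sup>2 / (\<rho> * smin)"
    proof -
      have "(obs - E)\<^sup>2 \<le> (\<epsilon> * sqrt N)\<^sup>2"
        using dev unfolding obs_def E_def N_def[symmetric] by (simp add: abs_le_square_iff[symmetric])
      then have "(obs - E)\<^sup>2 \<le> \<epsilon>\<^sup>2 * N" using N by (simp add: power_mult_distrib)
      then show ?thesis using N \<rho> smin by (simp add: field_simps)
    qed
    ultimately have "(\<bar>ln smin\<bar> + \<bar>ln smax\<bar> + ln 2) * \<bar>obs - E\<bar> + 2 * (obs - E)\<^sup>2 / (\<rho> * smin * N)
        \<le> (\<bar>ln smin\<bar> + \<bar>ln smax\<bar> + ln 2) * \<epsilon> * real n + 2 * \<epsilon>\<^sup>2 / (\<rho> * smin)"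
      by (simp add: mult.assoc add_mono mult_left_mono)
    moreover have "PR k n (\<lambda>c d. \<rho> * S c d) (Rconf n e z) a b = E / N"
      unfolding E_def N_def using n z by (rule PR_Rconf_eq)
    ultimately show ?thesis
      using tau_linearization_error[OF N obs E \<rho> smin half] unfolding N_def obs_def E_def by simp
  qed
qed

lemma sum_ocount_minus_expected:
  assumes "\<And>i. i < n \<Longrightarrow> e i < k"
  shows "(\<Sum>a<k. \<Sum>b<k. ocount n A e a b - expected_ocount n P e z a b)
       = (\<Sum>i<n. \<Sum>j<n. of_bool (A i j) - (if i = j then 0 else P (z i) (z j)))"
  unfolding ocount_eq_block_sum expected_ocount_def block_sum_diff[symmetric] using assms by (rule sum_block_sum)

lemma Xfun_diff_le:
  fixes \<rho> smin smax \<gamma> :: real and S :: "nat \<Rightarrow> nat \<Rightarrow> real"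
  defines "P \<equiv> \<lambda>c d. \<rho> * S c d"
  assumes n: "0 < n" and \<rho>: "0 < \<rho>" and smin: "0 < smin" and half: "\<rho> * smax \<le> 1/2"
    and S: "\<And>c d. c < k \<Longrightarrow> d < k \<Longrightarrow> smin \<le> S c d \<and> S c d \<le> smax"
    and z: "\<And>i. i < n \<Longrightarrow> z i < k" and e: "\<And>i. i < n \<Longrightarrow> e i < k"
    and A: "\<And>i. \<not> A i i" and \<gamma>: "0 \<le> \<gamma>"
    and dev: "\<And>f a b. f \<in> {e, z} \<Longrightarrow> a < k \<Longrightarrow> b < k \<Longrightarrow>
      \<bar>ocount n A f a b - expected_ocount n P f z a b\<bar> \<le> \<gamma> * \<rho> * real n * sqrt (npair n f a b)"
  shows "\<bar>Xfun k n P A e z - Xfun k n P A z z\<bar>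
         \<le> real k ^ 2 * \<rho> * ((\<bar>ln smin\<bar> + \<bar>ln smax\<bar> + ln 2) * \<gamma> + 2 * \<gamma>\<^sup>2 / smin)"
proof -
  define C where "C = \<bar>ln smin\<bar> + \<bar>ln smax\<bar> + ln 2"
  define B where "B = \<rho> * (real n)\<^sup>2 * (C * \<gamma> + 2 * \<gamma>\<^sup>2 / smin)"
  define D where "D f a b = ocount n A f a b - expected_ocount n P f z a b" for f a b
  define r where "r f a b = npair n f a b * (tau (ocount n A f a b / npair n f a b)
      - tau (PR k n P (Rconf n f z) a b)) - D f a b * ln \<rho>" for f a b
  have B: "C * (\<gamma> * \<rho> * real n) * real n + 2 * (\<gamma> * \<rho> * real n)\<^sup>2 / (\<rho> * smin) = B"
    using \<rho> by (simp add: B_def power2_eq_square field_simps)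
  have r: "\<bar>\<Sum>a<k. \<Sum>b<k. r f a b\<bar> \<le> real k ^ 2 * B" if f: "f \<in> {e, z}" for f
  proof -
    have "\<bar>r f a b\<bar> \<le> B" if "a < k" "b < k" for a b
      unfolding r_def D_def P_def B[symmetric] C_def
      by (rule block_term_linearization_error[OF n \<rho> smin half S z A])
        (use dev[OF f that] \<gamma> \<rho> in \<open>simp_all add: P_def\<close>)
    then have "(\<Sum>a<k. \<Sum>b<k. \<bar>r f a b\<bar>) \<le> (\<Sum>a<k. \<Sum>b<k. B)"
      by (intro sum_mono) auto
    moreover have "\<bar>\<Sum>a<k. \<Sum>b<k. r f a b\<bar> \<le> (\<Sum>a<k. \<Sum>b<k. \<bar>r f a b\<bar>)"
      by (rule order_trans[OF sum_abs]) (intro sum_mono sum_abs)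
    ultimately show ?thesis by (simp add: power2_eq_square)
  qed
  have X: "Xfun k n P A f z = ((\<Sum>a<k. \<Sum>b<k. r f a b) + ln \<rho> * (\<Sum>a<k. \<Sum>b<k. D f a b)) / (2 * (real n)\<^sup>2)"
    for f
    unfolding Xfun_def r_def by (simp add: sum_subtractf sum_distrib_left sum_divide_distrib mult.commute)
  have D_total: "(\<Sum>a<k. \<Sum>b<k. D f a b) = (\<Sum>i<n. \<Sum>j<n. of_bool (A i j) - (if i = j then 0 else P (z i) (z j)))"
    if "\<And>i. i < n \<Longrightarrow> f i < k" for f
    unfolding D_def using that by (rule sum_ocount_minus_expected)
  have "(\<Sum>a<k. \<Sum>b<k. D e a b) = (\<Sum>a<k. \<Sum>b<k. D z a b)"
    using D_total[OF e] D_total[OF z] by simp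
  have "\<bar>Xfun k n P A e z - Xfun k n P A z z\<bar>
      = \<bar>(\<Sum>a<k. \<Sum>b<k. r e a b) - (\<Sum>a<k. \<Sum>b<k. r z a b)\<bar> / (2 * (real n)\<^sup>2)"
    unfolding X \<open>(\<Sum>a<k. \<Sum>b<k. D e a b) = _\<close> by (simp add: diff_divide_distrib[symmetric])
  also have "\<dots> \<le> (2 * (real k ^ 2 * B)) / (2 * (real n)\<^sup>2)"
    using r[of e] r[of z] by (intro divide_right_mono) auto
  also have "\<dots> = real k ^ 2 * \<rho> * (C * \<gamma> + 2 * \<gamma>\<^sup>2 / smin)"
    unfolding B_def using n by simp
  finally show ?thesis unfolding C_def .
qed

section \<open>Concentration of the edge counts\<close>

definition upper_pairs :: "nat \<Rightarrow> (nat \<times> nat) set" where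
  "upper_pairs n = {(i, j). i < j \<and> j < n}"

definition sym_adj :: "(nat \<times> nat \<Rightarrow> bool) \<Rightarrow> nat \<Rightarrow> nat \<Rightarrow> bool" where
  "sym_adj U i j = (if i < j then U (i, j) else if j < i then U (j, i) else False)"

lemma sbm_pmf_eq_bind:
  "sbm_pmf \<pi> P n = Pi_pmf {0..<n} 0 (\<lambda>_. \<pi>) \<bind>
     (\<lambda>z. map_pmf (\<lambda>U. (z, sym_adj U)) (Pi_pmf (upper_pairs n) False (\<lambda>(i, j). bernoulli_pmf (P (z i) (z j)))))"
  unfolding sbm_pmf_def map_pmf_def sym_adj_def upper_pairs_def ..

lemma finite_upper_pairs: "finite (upper_pairs n)"
  by (rule finite_subset[of _ "{..<n} \<times> {..<n}"]) (auto simp: upper_pairs_def)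

lemma sum_square_eq_sum_upper_pairs:
  fixes g :: "nat \<Rightarrow> nat \<Rightarrow> real"
  assumes "\<And>i. g i i = 0"
  shows "(\<Sum>i<n. \<Sum>j<n. g i j) = (\<Sum>(i, j)\<in>upper_pairs n. g i j + g j i)"
proof (induction n)
  case 0
  then show ?case by (simp add: upper_pairs_def)
next
  case (Suc n)
  have split: "upper_pairs (Suc n) = upper_pairs n \<union> (\<lambda>i. (i, n)) ` {..<n}"
    by (auto simp: upper_pairs_def less_Suc_eq)
  have "(\<Sum>i<Suc n. \<Sum>j<Suc n. g i j) = (\<Sum>i<n. \<Sum>j<n. g i j) + (\<Sum>i<n. g i n + g n i)"
    using assms by (simp add: sum.distrib)
  also have "\<dots> = (\<Sum>(i, j)\<in>upper_pairs n. g i j + g j i) + (\<Sum>(i, j)\<in>(\<lambda>i. (i, n)) ` {..<n}. g i j + g j i)"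
    by (simp add: Suc.IH sum.reindex inj_on_def)
  also have "\<dots> = (\<Sum>(i, j)\<in>upper_pairs (Suc n). g i j + g j i)"
    unfolding split using finite_upper_pairs[of n]
    by (intro sum.union_disjoint[symmetric]) (auto simp: upper_pairs_def)
  finally show ?case .
qed

lemma block_sum_eq_sum_upper_pairs:
  assumes "\<And>i. F i i = 0" and "\<And>i j. i < n \<Longrightarrow> j < n \<Longrightarrow> F i j = F j i"
  shows "block_sum n e a b F
       = (\<Sum>(i, j)\<in>upper_pairs n. (of_bool (e i = a \<and> e j = b) + of_bool (e j = a \<and> e i = b)) * F i j)"
  unfolding block_sum_def using assms
  by (subst sum_square_eq_sum_upper_pairs)
    (auto simp: algebra_simps upper_pairs_def intro!: sum.cong simp del: sum_of_bool_mult_eq)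

lemma ocount_deviation_tail:
  fixes P :: "nat \<Rightarrow> nat \<Rightarrow> real" and t \<mu> :: real
  assumes sym: "\<And>i j. i < n \<Longrightarrow> j < n \<Longrightarrow> P (z i) (z j) = P (z j) (z i)"
    and P: "\<And>i j. i < n \<Longrightarrow> j < n \<Longrightarrow> 0 \<le> P (z i) (z j) \<and> P (z i) (z j) \<le> 1"
    and \<mu>: "expected_ocount n P e z a b \<le> \<mu>" "0 < \<mu>" and t: "0 < t"
  shows "measure_pmf.prob (Pi_pmf (upper_pairs n) False (\<lambda>(i, j). bernoulli_pmf (P (z i) (z j))))
           {U. t < \<bar>ocount n (sym_adj U) e a b - expected_ocount n P e z a b\<bar>}
         \<le> 2 * exp (- min (t\<^sup>2 / (8 * \<mu>)) (t / 4))"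
proof -
  define w where "w = (\<lambda>(i, j). of_bool (e i = a \<and> e j = b) + of_bool (e j = a \<and> e i = b) :: real)"
  define p where "p = (\<lambda>(i, j). P (z i) (z j))"
  have w: "0 \<le> w x" "w x \<le> 2" for x by (auto simp: w_def split: prod.splits)
  have p: "0 \<le> p x \<and> p x \<le> 1" if "x \<in> upper_pairs n" for x
    using that P by (auto simp: p_def upper_pairs_def)
  have E: "expected_ocount n P e z a b = (\<Sum>x\<in>upper_pairs n. w x * p x)"
    unfolding expected_ocount_def using sym
    by (subst block_sum_eq_sum_upper_pairs) (auto simp: w_def p_def upper_pairs_def intro!: sum.cong)
  have O: "ocount n (sym_adj U) e a b = (\<Sum>x\<in>upper_pairs n. w x * of_bool (U x))" for U
    unfolding ocount_eq_block_sum
    by (subst block_sum_eq_sum_upper_pairs) (auto simp: w_def sym_adj_def upper_pairs_def intro!: sum.cong)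
  have "(w x)\<^sup>2 \<le> 2 * w x" for x using w[of x] by (simp add: power2_eq_square mult_right_mono)
  then have "(\<Sum>x\<in>upper_pairs n. (w x)\<^sup>2 * p x) \<le> (\<Sum>x\<in>upper_pairs n. 2 * (w x * p x))"
    using p by (intro sum_mono) (simp add: mult_right_mono flip: mult.assoc)
  also have "\<dots> \<le> 2 * \<mu>" using \<mu> by (simp add: E sum_distrib_left[symmetric])
  finally have V: "(\<Sum>x\<in>upper_pairs n. (w x)\<^sup>2 * p x) \<le> 2 * \<mu>" .
  have "measure_pmf.prob (Pi_pmf (upper_pairs n) False (\<lambda>x. bernoulli_pmf (p x)))
      {U. t < \<bar>\<Sum>x\<in>upper_pairs n. w x * (of_bool (U x) - p x)\<bar>}
      \<le> 2 * exp (- min (t\<^sup>2 / (4 * (2 * \<mu>))) (t / 4))"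
    using w p V \<mu>(2) t by (intro Pi_pmf_bernoulli_sum_deviation finite_upper_pairs) auto
  moreover have "(\<lambda>(i, j). bernoulli_pmf (P (z i) (z j))) = (\<lambda>x. bernoulli_pmf (p x))"
    by (auto simp: p_def)
  ultimately show ?thesis
    by (simp add: O E sum_subtractf right_diff_distrib mult.commute)
qed

lemma map_pmf_eq_bernoulli_pmf: "map_pmf (\<lambda>v. v = a) p = bernoulli_pmf (pmf p a)"
proof (rule pmf_eqI)
  fix b :: bool
  have "pmf (map_pmf (\<lambda>v. v = a) p) True = pmf p a"
    by (simp add: pmf_map vimage_def measure_pmf_single)
  moreover have "pmf (map_pmf (\<lambda>v. v = a) p) False = 1 - pmf p a"
  proof -
    have "(\<lambda>v. v = a) -` {False} = UNIV - {a}" by auto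
    then show ?thesis
      using measure_pmf.prob_compl[of "{a}" p] by (simp add: pmf_map measure_pmf_single)
  qed
  ultimately show "pmf (map_pmf (\<lambda>v. v = a) p) b = pmf (bernoulli_pmf (pmf p a)) b"
    by (cases b) (simp_all add: pmf_le_1)
qed

lemma ncount_lower_tail:
  fixes \<beta> :: real
  assumes \<beta>: "0 < \<beta>" "\<beta> \<le> 1" "2 * \<beta> \<le> pmf \<pi> a"
  shows "measure_pmf.prob (Pi_pmf {0..<n} d (\<lambda>_. \<pi>)) {z. ncount n z a < \<beta> * real n}
         \<le> 2 * exp (- \<beta>\<^sup>2 * real n / 4)"
proof (cases "n = 0")
  case True
  then show ?thesis by (simp add: ncount_def)
next
  case False
  define q where "q = pmf \<pi> a"
  have q: "0 \<le> q" "q \<le> 1" by (auto simp: q_def pmf_le_1)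
  have "{z. ncount n z a < \<beta> * real n}
      \<subseteq> {z. \<beta> * real n < \<bar>\<Sum>i\<in>{0..<n}. 1 * (of_bool (z i = a) - q)\<bar>}"
  proof
    fix z assume "z \<in> {z. ncount n z a < \<beta> * real n}"
    moreover have "(\<Sum>i\<in>{0..<n}. 1 * (of_bool (z i = a) - q)) = ncount n z a - real n * q"
      by (simp add: ncount_eq_sum sum_subtractf lessThan_atLeast0)
    moreover have "2 * (\<beta> * real n) \<le> real n * q"
      using mult_right_mono[OF \<beta>(3), of "real n"] by (simp add: q_def mult_ac)
    ultimately show "z \<in> {z. \<beta> * real n < \<bar>\<Sum>i\<in>{0..<n}. 1 * (of_bool (z i = a) - q)\<bar>}"
      by (auto simp: abs_if)
  qed
  then have "measure_pmf.prob (Pi_pmf {0..<n} d (\<lambda>_. \<pi>)) {z. ncount n z a < \<beta> * real n}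
      \<le> measure_pmf.prob (Pi_pmf {0..<n} d (\<lambda>_. \<pi>))
           {z. \<beta> * real n < \<bar>\<Sum>i\<in>{0..<n}. 1 * (of_bool (z i = a) - q)\<bar>}"
    by (intro measure_pmf.finite_measure_mono) auto
  also have "\<dots> \<le> 2 * exp (- min ((\<beta> * real n)\<^sup>2 / (4 * real n)) (\<beta> * real n / 4))"
    using q \<beta> False
    by (intro Pi_pmf_bernoulli_sum_deviation) (auto simp: q_def map_pmf_eq_bernoulli_pmf mult_left_le_one_le)
  also have "min ((\<beta> * real n)\<^sup>2 / (4 * real n)) (\<beta> * real n / 4) = \<beta>\<^sup>2 * real n / 4"
    using False \<beta> by (simp add: min_def power2_eq_square field_simps mult_left_le_one_le)
  finally show ?thesis by simp
qed

lemma counts_cong: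
  assumes "\<And>i. i < n \<Longrightarrow> e i = e' i"
  shows "ncount n e a = ncount n e' a" and "npair n e a b = npair n e' a b"
    and "ocount n A e a b = ocount n A e' a b"
    and "expected_ocount n P e z a b = expected_ocount n P e' z a b"
  using assms block_sum_cong[OF assms]
  by (auto simp: ncount_eq_sum npair_eq_block_sum ocount_eq_block_sum expected_ocount_def intro: sum.cong)

definition ocount_concentrated ::
    "nat \<Rightarrow> nat \<Rightarrow> (nat \<Rightarrow> nat \<Rightarrow> real) \<Rightarrow> real \<Rightarrow> real \<Rightarrow> (nat \<Rightarrow> nat) \<Rightarrow> (nat \<Rightarrow> nat \<Rightarrow> bool) \<Rightarrow> bool" where
  "ocount_concentrated k n P \<alpha> \<epsilon> z A \<longleftrightarrow>
     (\<forall>e. (\<forall>i<n. e i < k) \<longrightarrow> (\<forall>a<k. \<alpha> * real n \<le> ncount n e a) \<longrightarrow>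
        (\<forall>a<k. \<forall>b<k. \<bar>ocount n A e a b - expected_ocount n P e z a b\<bar> \<le> \<epsilon> * sqrt (npair n e a b)))"

lemma npair_ge_square:
  fixes \<alpha> :: real
  assumes "1 \<le> \<alpha> * real n" "\<alpha> * real n \<le> ncount n e a" "\<alpha> * real n \<le> ncount n e b"
  shows "(\<alpha> * real n - 1)\<^sup>2 \<le> npair n e a b"
proof -
  have "(\<alpha> * real n - 1)\<^sup>2 \<le> ncount n e a * (ncount n e b - 1)"
    using assms by (simp add: power2_eq_square mult_mono)
  also have "\<dots> \<le> npair n e a b"
    using assms by (simp add: npair_def algebra_simps mult_left_mono)
  finally show ?thesis .
qed

lemma prob_ocount_deviation_balanced_le:
  fixes P :: "nat \<Rightarrow> nat \<Rightarrow> real" and pmax \<alpha> \<epsilon> :: real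
  assumes z: "\<And>i. i < n \<Longrightarrow> z i < k"
    and P: "\<And>c d. c < k \<Longrightarrow> d < k \<Longrightarrow> 0 \<le> P c d \<and> P c d \<le> pmax"
    and sym: "\<And>c d. c < k \<Longrightarrow> d < k \<Longrightarrow> P c d = P d c"
    and pmax: "0 < pmax" "pmax \<le> 1" and \<epsilon>: "0 < \<epsilon>" and \<alpha>: "2 \<le> \<alpha> * real n"
    and e: "\<And>c. c < k \<Longrightarrow> \<alpha> * real n \<le> ncount n e c" and ab: "a < k" "b < k"
  shows "measure_pmf.prob (Pi_pmf (upper_pairs n) False (\<lambda>(i, j). bernoulli_pmf (P (z i) (z j))))
           {U. \<epsilon> * sqrt (npair n e a b) < \<bar>ocount n (sym_adj U) e a b - expected_ocount n P e z a b\<bar>}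
         \<le> 2 * exp (- min (\<epsilon>\<^sup>2 / (8 * pmax)) (\<epsilon> * (\<alpha> * real n - 1) / 4))"
proof -
  define N where "N = npair n e a b"
  have N: "(\<alpha> * real n - 1)\<^sup>2 \<le> N" unfolding N_def using \<alpha> e ab by (intro npair_ge_square) auto
  have "1 \<le> (\<alpha> * real n - 1)\<^sup>2" using \<alpha> by (intro one_le_power) simp
  then have N_pos: "0 < N" using N by linarith
  have Pz: "0 \<le> P (z i) (z j) \<and> P (z i) (z j) \<le> pmax" if "i < n" "j < n" for i j using P z that by blast
  then have Pz1: "0 \<le> P (z i) (z j) \<and> P (z i) (z j) \<le> 1" if "i < n" "j < n" for i j
    using that pmax(2) by fastforce
  have "measure_pmf.prob (Pi_pmf (upper_pairs n) False (\<lambda>(i, j). bernoulli_pmf (P (z i) (z j))))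
      {U. \<epsilon> * sqrt N < \<bar>ocount n (sym_adj U) e a b - expected_ocount n P e z a b\<bar>}
      \<le> 2 * exp (- min ((\<epsilon> * sqrt N)\<^sup>2 / (8 * (pmax * N))) (\<epsilon> * sqrt N / 4))"
  proof (intro ocount_deviation_tail)
    show "expected_ocount n P e z a b \<le> pmax * N"
      unfolding N_def using Pz by (intro expected_ocount_bounds(2)) auto
  qed (use sym z Pz1 pmax N_pos \<epsilon> in auto)
  also have "\<dots> \<le> 2 * exp (- min (\<epsilon>\<^sup>2 / (8 * pmax)) (\<epsilon> * (\<alpha> * real n - 1) / 4))"
  proof -
    have "\<alpha> * real n - 1 \<le> sqrt N" using N by (rule real_le_rsqrt)
    then have "\<epsilon> * (\<alpha> * real n - 1) / 4 \<le> \<epsilon> * sqrt N / 4" using \<epsilon> by simp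
    moreover have "(\<epsilon> * sqrt N)\<^sup>2 / (8 * (pmax * N)) = \<epsilon>\<^sup>2 / (8 * pmax)"
      using N_pos pmax by (simp add: power_mult_distrib)
    ultimately show ?thesis by simp
  qed
  finally show ?thesis unfolding N_def .
qed

lemma prob_not_ocount_concentrated_le:
  fixes P :: "nat \<Rightarrow> nat \<Rightarrow> real" and pmax \<alpha> \<epsilon> :: real
  assumes z: "\<And>i. i < n \<Longrightarrow> z i < k"
    and P: "\<And>c d. c < k \<Longrightarrow> d < k \<Longrightarrow> 0 \<le> P c d \<and> P c d \<le> pmax"
    and sym: "\<And>c d. c < k \<Longrightarrow> d < k \<Longrightarrow> P c d = P d c"
    and pmax: "0 < pmax" "pmax \<le> 1" and \<epsilon>: "0 < \<epsilon>" and \<alpha>: "2 \<le> \<alpha> * real n"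
  shows "measure_pmf.prob (Pi_pmf (upper_pairs n) False (\<lambda>(i, j). bernoulli_pmf (P (z i) (z j))))
           {U. \<not> ocount_concentrated k n P \<alpha> \<epsilon> z (sym_adj U)}
         \<le> real k ^ (n + 2) * (2 * exp (- min (\<epsilon>\<^sup>2 / (8 * pmax)) (\<epsilon> * (\<alpha> * real n - 1) / 4)))"
proof -
  define M where "M = Pi_pmf (upper_pairs n) False (\<lambda>(i, j). bernoulli_pmf (P (z i) (z j)))"
  define T where "T = {(e, a, b). e \<in> {0..<n} \<rightarrow>\<^sub>E {0..<k} \<and> (\<forall>c<k. \<alpha> * real n \<le> ncount n e c) \<and> a < k \<and> b < k}"
  define B where "B = (\<lambda>(e, a, b). {U. \<epsilon> * sqrt (npair n e a b)
      < \<bar>ocount n (sym_adj U) e a b - expected_ocount n P e z a b\<bar>})"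
  have T: "T \<subseteq> ({0..<n} \<rightarrow>\<^sub>E {0..<k}) \<times> {..<k} \<times> {..<k}" by (auto simp: T_def)
  then have "finite T" by (rule finite_subset) (auto intro!: finite_PiE)
  have "card T \<le> card (({0..<n} \<rightarrow>\<^sub>E {0..<k}) \<times> {..<k} \<times> {..<k})"
    using T by (intro card_mono) (auto intro!: finite_PiE)
  then have card_T: "card T \<le> k ^ (n + 2)" by (simp add: card_cartesian_product card_PiE mult_ac)
  have "{U. \<not> ocount_concentrated k n P \<alpha> \<epsilon> z (sym_adj U)} \<subseteq> (\<Union>x\<in>T. B x)"
  proof
    fix U assume "U \<in> {U. \<not> ocount_concentrated k n P \<alpha> \<epsilon> z (sym_adj U)}"
    then obtain e a b where e: "\<forall>i<n. e i < k" "\<forall>c<k. \<alpha> * real n \<le> ncount n e c" and ab: "a < k" "b < k"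
      and dev: "\<epsilon> * sqrt (npair n e a b) < \<bar>ocount n (sym_adj U) e a b - expected_ocount n P e z a b\<bar>"
      by (auto simp: ocount_concentrated_def not_le)
    have restrict: "\<And>i. i < n \<Longrightarrow> e i = restrict e {0..<n} i" by simp
    have "(restrict e {0..<n}, a, b) \<in> T" "U \<in> B (restrict e {0..<n}, a, b)"
      using e ab dev by (auto simp: T_def B_def counts_cong[OF restrict, symmetric])
    then show "U \<in> (\<Union>x\<in>T. B x)" by blast
  qed
  then have "measure_pmf.prob M {U. \<not> ocount_concentrated k n P \<alpha> \<epsilon> z (sym_adj U)}
      \<le> measure_pmf.prob M (\<Union>x\<in>T. B x)"
    by (intro measure_pmf.finite_measure_mono) auto
  also have "\<dots> \<le> (\<Sum>x\<in>T. measure_pmf.prob M (B x))"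
    using \<open>finite T\<close> by (intro measure_UNION_le) auto
  also have "\<dots> \<le> real (card T) * (2 * exp (- min (\<epsilon>\<^sup>2 / (8 * pmax)) (\<epsilon> * (\<alpha> * real n - 1) / 4)))"
    unfolding M_def B_def using z P sym pmax \<epsilon> \<alpha>
    by (intro sum_bounded_above) (auto simp: T_def intro!: prob_ocount_deviation_balanced_le)
  also have "\<dots> \<le> real k ^ (n + 2) * (2 * exp (- min (\<epsilon>\<^sup>2 / (8 * pmax)) (\<epsilon> * (\<alpha> * real n - 1) / 4)))"
    using card_T by (intro mult_right_mono) (metis of_nat_le_iff of_nat_power, simp)
  finally show ?thesis unfolding M_def .
qed

lemma prob_labels_unbalanced_le:
  fixes \<beta> :: real
  assumes \<pi>: "set_pmf \<pi> = {0..<k}" and \<beta>: "0 < \<beta>" "\<beta> \<le> 1" "\<And>a. a < k \<Longrightarrow> 2 * \<beta> \<le> pmf \<pi> a"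
  shows "measure_pmf.prob (Pi_pmf {0..<n} 0 (\<lambda>_. \<pi>))
           {z. \<not> (\<forall>i<n. z i < k) \<or> (\<exists>a<k. ncount n z a < \<beta> * real n)}
         \<le> 2 * real k * exp (- \<beta>\<^sup>2 * real n / 4)"
proof -
  define M where "M = Pi_pmf {0..<n} 0 (\<lambda>_. \<pi>)"
  define X where "X = {z. \<not> (\<forall>i<n. z i < k) \<or> (\<exists>a<k. ncount n z a < \<beta> * real n)}"
  have "set_pmf M = PiE_dflt {0..<n} 0 (\<lambda>_. {0..<k})"
    unfolding M_def by (simp add: set_Pi_pmf \<pi> comp_def)
  then have "X \<inter> set_pmf M \<subseteq> (\<Union>a\<in>{..<k}. {z. ncount n z a < \<beta> * real n})"
    unfolding X_def PiE_dflt_def by auto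
  then have "measure_pmf.prob M X \<le> measure_pmf.prob M (\<Union>a\<in>{..<k}. {z. ncount n z a < \<beta> * real n})"
    by (subst measure_Int_set_pmf[symmetric]) (intro measure_pmf.finite_measure_mono, auto)
  also have "\<dots> \<le> (\<Sum>a<k. measure_pmf.prob M {z. ncount n z a < \<beta> * real n})"
    by (rule measure_UNION_le) auto
  also have "\<dots> \<le> (\<Sum>a<k. 2 * exp (- \<beta>\<^sup>2 * real n / 4))"
    unfolding M_def using \<beta> by (intro sum_mono ncount_lower_tail) auto
  finally show ?thesis unfolding M_def X_def by simp
qed

definition sbm_typical ::
    "nat \<Rightarrow> nat \<Rightarrow> (nat \<Rightarrow> nat \<Rightarrow> real) \<Rightarrow> real \<Rightarrow> real \<Rightarrow> real \<Rightarrow> (nat \<Rightarrow> nat) \<times> (nat \<Rightarrow> nat \<Rightarrow> bool) \<Rightarrow> bool" where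
  "sbm_typical k n P \<alpha> \<beta> \<epsilon> = (\<lambda>(z, A). (\<forall>i<n. z i < k) \<and> (\<forall>i. \<not> A i i)
     \<and> (\<forall>a<k. \<beta> * real n \<le> ncount n z a) \<and> ocount_concentrated k n P \<alpha> \<epsilon> z A)"

lemma prob_sbm_edges_not_concentrated_le:
  fixes P :: "nat \<Rightarrow> nat \<Rightarrow> real" and pmax \<alpha> \<epsilon> :: real
  assumes P: "\<And>c d. c < k \<Longrightarrow> d < k \<Longrightarrow> 0 \<le> P c d \<and> P c d \<le> pmax"
    and sym: "\<And>c d. c < k \<Longrightarrow> d < k \<Longrightarrow> P c d = P d c"
    and pmax: "0 < pmax" "pmax \<le> 1" and \<epsilon>: "0 < \<epsilon>" and \<alpha>: "2 \<le> \<alpha> * real n"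
  shows "measure_pmf.prob (sbm_pmf \<pi> P n)
           {(z, A). (\<forall>i<n. z i < k) \<and> ((\<exists>i. A i i) \<or> \<not> ocount_concentrated k n P \<alpha> \<epsilon> z A)}
         \<le> real k ^ (n + 2) * (2 * exp (- min (\<epsilon>\<^sup>2 / (8 * pmax)) (\<epsilon> * (\<alpha> * real n - 1) / 4)))"
    (is "measure_pmf.prob _ ?bad \<le> ?c")
proof -
  define Q where "Q z = Pi_pmf (upper_pairs n) False (\<lambda>(i, j). bernoulli_pmf (P (z i) (z j)))" for z
  have edges: "emeasure (map_pmf (\<lambda>U. (z, sym_adj U)) (Q z)) ?bad \<le> ennreal ?c" for z
  proof (cases "\<forall>i<n. z i < k")
    case True
    have "(\<lambda>U. (z, sym_adj U)) -` ?bad = {U. \<not> ocount_concentrated k n P \<alpha> \<epsilon> z (sym_adj U)}"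
      using True by (auto simp: sym_adj_def)
    moreover have "measure_pmf.prob (Q z) {U. \<not> ocount_concentrated k n P \<alpha> \<epsilon> z (sym_adj U)} \<le> ?c"
      unfolding Q_def using True by (intro prob_not_ocount_concentrated_le P sym pmax \<epsilon> \<alpha>) auto
    ultimately show ?thesis by (simp add: measure_pmf.emeasure_eq_measure ennreal_leI)
  next
    case False
    then have "(\<lambda>U. (z, sym_adj U)) -` ?bad = {}" by auto
    then show ?thesis by (simp only: emeasure_map_pmf) simp
  qed
  have "emeasure (sbm_pmf \<pi> P n) ?bad
      = (\<integral>\<^sup>+z. emeasure (map_pmf (\<lambda>U. (z, sym_adj U)) (Q z)) ?bad \<partial>Pi_pmf {0..<n} 0 (\<lambda>_. \<pi>))"
    unfolding sbm_pmf_eq_bind Q_def by (rule emeasure_bind_pmf)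
  also have "\<dots> \<le> (\<integral>\<^sup>+z. ennreal ?c \<partial>Pi_pmf {0..<n} 0 (\<lambda>_. \<pi>))" by (intro nn_integral_mono edges)
  also have "\<dots> = ennreal ?c" by (simp add: measure_pmf.emeasure_space_1)
  finally show ?thesis by (simp add: measure_pmf.emeasure_eq_measure)
qed

lemma prob_not_sbm_typical_le:
  fixes P :: "nat \<Rightarrow> nat \<Rightarrow> real" and pmax \<alpha> \<beta> \<epsilon> :: real
  assumes \<pi>: "set_pmf \<pi> = {0..<k}" and \<beta>: "0 < \<beta>" "\<beta> \<le> 1" "\<And>a. a < k \<Longrightarrow> 2 * \<beta> \<le> pmf \<pi> a"
    and P: "\<And>c d. c < k \<Longrightarrow> d < k \<Longrightarrow> 0 \<le> P c d \<and> P c d \<le> pmax"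
    and sym: "\<And>c d. c < k \<Longrightarrow> d < k \<Longrightarrow> P c d = P d c"
    and pmax: "0 < pmax" "pmax \<le> 1" and \<epsilon>: "0 < \<epsilon>" and \<alpha>: "2 \<le> \<alpha> * real n"
  shows "measure_pmf.prob (sbm_pmf \<pi> P n) {x. \<not> sbm_typical k n P \<alpha> \<beta> \<epsilon> x}
         \<le> 2 * real k * exp (- \<beta>\<^sup>2 * real n / 4)
           + real k ^ (n + 2) * (2 * exp (- min (\<epsilon>\<^sup>2 / (8 * pmax)) (\<epsilon> * (\<alpha> * real n - 1) / 4)))"
proof -
  define bad_labels where "bad_labels = {z. \<not> (\<forall>i<n. z i < k) \<or> (\<exists>a<k. ncount n z a < \<beta> * real n)}"
  define bad_edges where
    "bad_edges = {(z, A). (\<forall>i<n. z i < k) \<and> ((\<exists>i. A i i) \<or> \<not> ocount_concentrated k n P \<alpha> \<epsilon> z A)}"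
  have "measure_pmf.prob (sbm_pmf \<pi> P n) {x. \<not> sbm_typical k n P \<alpha> \<beta> \<epsilon> x}
      \<le> measure_pmf.prob (sbm_pmf \<pi> P n) (fst -` bad_labels \<union> bad_edges)"
    by (intro measure_pmf.finite_measure_mono)
      (auto simp: sbm_typical_def bad_labels_def bad_edges_def not_le)
  also have "\<dots> \<le> measure_pmf.prob (sbm_pmf \<pi> P n) (fst -` bad_labels) + measure_pmf.prob (sbm_pmf \<pi> P n) bad_edges"
    by (rule measure_Un_le) auto
  also have "measure_pmf.prob (sbm_pmf \<pi> P n) (fst -` bad_labels)
      = measure_pmf.prob (map_pmf fst (sbm_pmf \<pi> P n)) bad_labels" by simp
  also have "map_pmf fst (sbm_pmf \<pi> P n) = Pi_pmf {0..<n} 0 (\<lambda>_. \<pi>)"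
    unfolding sbm_pmf_eq_bind map_bind_pmf map_pmf_comp by (simp add: bind_return_pmf')
  finally show ?thesis
    using prob_labels_unbalanced_le[where \<pi> = \<pi> and k = k and n = n, OF \<pi> \<beta>]
      prob_sbm_edges_not_concentrated_le[where P = P and k = k and \<pi> = \<pi>, OF P sym pmax \<epsilon> \<alpha>]
    unfolding bad_labels_def bad_edges_def by linarith
qed

section \<open>Asymptotics\<close>

lemma eventually_sbm_regime:
  fixes \<rho> \<alpha>s :: "nat \<Rightarrow> real" and \<beta> \<gamma> smax K :: real
  assumes \<rho>: "\<rho> \<longlonglongrightarrow> 0" and n\<rho>: "filterlim (\<lambda>n. real n * \<rho> n) at_top sequentially"
    and \<alpha>n\<rho>: "filterlim (\<lambda>n. \<alpha>s n * (real n * \<rho> n)) at_top sequentially"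
    and \<beta>: "0 < \<beta>" and \<gamma>: "0 < \<gamma>" and smax: "0 < smax"
  defines "a \<equiv> \<lambda>n. min (\<alpha>s n) \<beta>"
  shows "eventually (\<lambda>n. 0 < \<rho> n \<and> \<rho> n * smax \<le> 1/2 \<and> 2 \<le> a n * real n
      \<and> real n * K \<le> \<gamma>\<^sup>2 * \<rho> n * (real n)\<^sup>2 / (8 * smax)
      \<and> real n * K \<le> \<gamma> * \<rho> n * real n * (a n * real n - 1) / 4) sequentially"
proof -
  define L where "L = max 2 (4 * K / \<gamma> + 1)"
  have "eventually (\<lambda>n. \<rho> n < min 1 (1 / (2 * smax))) sequentially"
    using smax by (intro order_tendstoD(2)[OF \<rho>]) simp
  moreover have "eventually (\<lambda>n. max 1 (8 * smax * K / \<gamma>\<^sup>2) \<le> real n * \<rho> n) sequentially"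
    using n\<rho> unfolding filterlim_at_top by blast
  moreover have "eventually (\<lambda>n. L \<le> \<alpha>s n * (real n * \<rho> n)) sequentially"
    using \<alpha>n\<rho> unfolding filterlim_at_top by blast
  moreover have "eventually (\<lambda>n. L / \<beta> \<le> real n * \<rho> n) sequentially"
    using n\<rho> unfolding filterlim_at_top by blast
  ultimately show ?thesis
  proof eventually_elim
    case (elim n)
    define x where "x = real n * \<rho> n"
    have \<rho>1: "\<rho> n < 1" and half: "\<rho> n * smax \<le> 1/2"
      using elim smax by (auto simp: field_simps)
    have x1: "1 \<le> x" and xK: "8 * smax * K / \<gamma>\<^sup>2 \<le> x" using elim by (auto simp: x_def)
    then have "0 < real n * \<rho> n" by (simp add: x_def)
    then have n: "0 < real n" and \<rho>0: "0 < \<rho> n" by (auto simp: zero_less_mult_iff)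
    have "L \<le> \<beta> * x" using elim \<beta> by (simp add: x_def field_simps)
    then have ax: "L \<le> a n * x"
      using elim x1 by (simp add: a_def x_def min_mult_distrib_right)
    then have "2 \<le> a n * x" by (simp add: L_def)
    then have a0: "0 < a n" using x1 by (smt (verit) mult_nonpos_nonneg)
    have "a n * x \<le> a n * real n" using a0 \<rho>1 n by (simp add: x_def)
    then have "2 \<le> a n * real n" using \<open>2 \<le> a n * x\<close> by linarith
    moreover have "real n * K \<le> \<gamma>\<^sup>2 * \<rho> n * (real n)\<^sup>2 / (8 * smax)"
    proof -
      have "K \<le> \<gamma>\<^sup>2 * x / (8 * smax)" using xK \<gamma> smax by (simp add: field_simps)
      then have "real n * K \<le> real n * (\<gamma>\<^sup>2 * x / (8 * smax))" using n by (intro mult_left_mono) auto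
      then show ?thesis by (simp add: x_def power2_eq_square mult_ac)
    qed
    moreover have "real n * K \<le> \<gamma> * \<rho> n * real n * (a n * real n - 1) / 4"
    proof -
      have "4 * K / \<gamma> \<le> a n * x - \<rho> n" using ax \<rho>1 by (simp add: L_def)
      then have "K \<le> \<gamma> * (a n * x - \<rho> n) / 4" using \<gamma> by (simp add: field_simps)
      then have "real n * K \<le> real n * (\<gamma> * (a n * x - \<rho> n) / 4)" using n by (intro mult_left_mono) auto
      then show ?thesis by (simp add: x_def algebra_simps)
    qed
    ultimately show ?case using \<rho>0 half by simp
  qed
qed

lemma exists_pos_linear_plus_square_less:
  fixes c1 c2 \<delta> :: real
  assumes "0 < \<delta>"
  shows "\<exists>\<gamma>>0. c1 * \<gamma> + c2 * \<gamma>\<^sup>2 < \<delta>"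
proof -
  have "((\<lambda>\<gamma>. c1 * \<gamma> + c2 * \<gamma>\<^sup>2) \<longlongrightarrow> c1 * 0 + c2 * 0\<^sup>2) (at_right 0)"
    by (intro tendsto_intros)
  then have "eventually (\<lambda>\<gamma>. c1 * \<gamma> + c2 * \<gamma>\<^sup>2 < \<delta>) (at_right 0)"
    using assms by (intro order_tendstoD(2)) auto
  then obtain b where "0 < b" and b: "\<And>\<gamma>. 0 < \<gamma> \<Longrightarrow> \<gamma> < b \<Longrightarrow> c1 * \<gamma> + c2 * \<gamma>\<^sup>2 < \<delta>"
    unfolding eventually_at_right_field by auto
  then show ?thesis using b[of "b / 2"] by (intro exI[of _ "b / 2"]) auto
qed

lemma power_mult_exp_le:
  fixes h :: real
  assumes "0 < k" and "real n * (ln k + 1) \<le> h"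
  shows "real k ^ (n + 2) * exp (- h) \<le> real k ^ 2 * exp (- 1) ^ n"
proof -
  have "exp (- h) \<le> exp (- (real n * (ln k + 1)))" using assms(2) by simp
  also have "\<dots> = (exp (- 1) / real k) ^ n"
    using assms(1) by (simp add: exp_diff exp_minus field_simps exp_of_nat_mult
        exp_of_nat_mult[of n 1, simplified])
  finally have "real k ^ n * exp (- h) \<le> exp (- 1) ^ n"
    using assms(1) by (simp add: power_divide field_simps)
  then have "real k ^ 2 * (real k ^ n * exp (- h)) \<le> real k ^ 2 * exp (- 1) ^ n"
    by (intro mult_left_mono) auto
  then show ?thesis by (simp add: power_add power2_eq_square mult_ac)
qed

lemma summable_prob_not_sbm_typical:
  fixes \<rho> a :: "nat \<Rightarrow> real" and \<beta> \<gamma> smin smax :: real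
  assumes k: "0 < k" and \<pi>: "set_pmf \<pi> = {0..<k}"
    and \<beta>: "0 < \<beta>" "\<beta> \<le> 1" "\<And>a. a < k \<Longrightarrow> 2 * \<beta> \<le> pmf \<pi> a"
    and S: "\<And>c d. c < k \<Longrightarrow> d < k \<Longrightarrow> smin \<le> S c d \<and> S c d \<le> smax"
    and sym: "\<And>c d. c < k \<Longrightarrow> d < k \<Longrightarrow> S c d = S d c"
    and smin: "0 < smin" and \<gamma>: "0 < \<gamma>"
    and regime: "eventually (\<lambda>n. 0 < \<rho> n \<and> \<rho> n * smax \<le> 1/2 \<and> 2 \<le> a n * real n
      \<and> real n * (ln k + 1) \<le> \<gamma>\<^sup>2 * \<rho> n * (real n)\<^sup>2 / (8 * smax)
      \<and> real n * (ln k + 1) \<le> \<gamma> * \<rho> n * real n * (a n * real n - 1) / 4) sequentially"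
  shows "summable (\<lambda>n. measure_pmf.prob (sbm_pmf \<pi> (\<lambda>c d. \<rho> n * S c d) n)
           {x. \<not> sbm_typical k n (\<lambda>c d. \<rho> n * S c d) (a n) \<beta> (\<gamma> * \<rho> n * real n) x})"
proof (rule summable_comparison_test_ev)
  show "summable (\<lambda>n. 2 * real k * exp (- \<beta>\<^sup>2 / 4) ^ n + 2 * real k ^ 2 * exp (- 1) ^ n)"
    using \<beta> by (intro summable_add summable_mult summable_geometric) auto
  show "eventually (\<lambda>n. norm (measure_pmf.prob (sbm_pmf \<pi> (\<lambda>c d. \<rho> n * S c d) n)
           {x. \<not> sbm_typical k n (\<lambda>c d. \<rho> n * S c d) (a n) \<beta> (\<gamma> * \<rho> n * real n) x})
      \<le> 2 * real k * exp (- \<beta>\<^sup>2 / 4) ^ n + 2 * real k ^ 2 * exp (- 1) ^ n) sequentially"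
    using regime
  proof eventually_elim
    case (elim n)
    define h where "h = min ((\<gamma> * \<rho> n * real n)\<^sup>2 / (8 * (\<rho> n * smax))) (\<gamma> * \<rho> n * real n * (a n * real n - 1) / 4)"
    have smax: "0 < smax" using S[OF k k] smin by linarith
    have n: "0 < real n" using elim by (cases "n = 0") auto
    have P: "0 \<le> \<rho> n * S c d \<and> \<rho> n * S c d \<le> \<rho> n * smax" if "c < k" "d < k" for c d
      using S[OF that] smin elim by auto
    have "measure_pmf.prob (sbm_pmf \<pi> (\<lambda>c d. \<rho> n * S c d) n)
        {x. \<not> sbm_typical k n (\<lambda>c d. \<rho> n * S c d) (a n) \<beta> (\<gamma> * \<rho> n * real n) x}
        \<le> 2 * real k * exp (- \<beta>\<^sup>2 * real n / 4) + real k ^ (n + 2) * (2 * exp (- h))"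
      unfolding h_def using elim P smax \<gamma> n
      by (intro prob_not_sbm_typical_le \<pi> \<beta>) (auto simp: sym)
    also have "exp (- \<beta>\<^sup>2 * real n / 4) = exp (- \<beta>\<^sup>2 / 4) ^ n"
      by (simp add: exp_of_nat_mult[symmetric] mult.commute)
    also have "real k ^ (n + 2) * (2 * exp (- h)) \<le> 2 * real k ^ 2 * exp (- 1) ^ n"
    proof -
      have "(\<gamma> * \<rho> n * real n)\<^sup>2 / (8 * (\<rho> n * smax)) = \<gamma>\<^sup>2 * \<rho> n * (real n)\<^sup>2 / (8 * smax)"
        using elim by (simp add: power2_eq_square)
      then have "real n * (ln k + 1) \<le> h" using elim by (simp add: h_def)
      then show ?thesis using power_mult_exp_le[OF k] by (simp add: mult_ac)
    qed
    finally show ?case by simp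
  qed
qed

lemma Xfun_diff_le_if_sbm_typical:
  fixes \<rho> a \<alpha> \<beta> \<gamma> smin smax :: real and S :: "nat \<Rightarrow> nat \<Rightarrow> real"
  defines "P \<equiv> \<lambda>c d. \<rho> * S c d"
  assumes typical: "sbm_typical k n P a \<beta> (\<gamma> * \<rho> * real n) (z, A)"
    and e: "e \<in> Fset k n \<alpha>" and a: "a \<le> \<alpha>" "a \<le> \<beta>"
    and n: "0 < n" and \<rho>: "0 < \<rho>" and smin: "0 < smin" and half: "\<rho> * smax \<le> 1/2"
    and S: "\<And>c d. c < k \<Longrightarrow> d < k \<Longrightarrow> smin \<le> S c d \<and> S c d \<le> smax" and \<gamma>: "0 \<le> \<gamma>"
  shows "\<bar>Xfun k n P A e z - Xfun k n P A z z\<bar>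
         \<le> real k ^ 2 * \<rho> * ((\<bar>ln smin\<bar> + \<bar>ln smax\<bar> + ln 2) * \<gamma> + 2 * \<gamma>\<^sup>2 / smin)"
proof -
  have z: "\<forall>i<n. z i < k" and A: "\<forall>i. \<not> A i i" and z_balanced: "\<forall>c<k. \<beta> * real n \<le> ncount n z c"
    and conc: "ocount_concentrated k n P a (\<gamma> * \<rho> * real n) z A"
    using typical by (auto simp: sbm_typical_def)
  have e_labels: "\<forall>i<n. e i < k" and e_balanced: "\<forall>c<k. \<alpha> * real n \<le> ncount n e c"
    using e by (auto simp: Fset_def PiE_def Pi_def)
  have "a * real n \<le> \<alpha> * real n" "a * real n \<le> \<beta> * real n" using a by (auto intro: mult_right_mono)
  then have "\<forall>c<k. a * real n \<le> ncount n f c" if "f \<in> {e, z}" for f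
    using that e_balanced z_balanced by fastforce
  then have "\<bar>ocount n A f c d - expected_ocount n P f z c d\<bar> \<le> \<gamma> * \<rho> * real n * sqrt (npair n f c d)"
    if "f \<in> {e, z}" "c < k" "d < k" for f c d
    using conc that e_labels z unfolding ocount_concentrated_def by blast
  then show ?thesis
    unfolding P_def using n \<rho> smin half S z e_labels A \<gamma> by (intro Xfun_diff_le) auto
qed

lemma AE_eventually_notin_of_summable:
  fixes X :: "nat \<Rightarrow> 'w \<Rightarrow> 'a" and p :: "nat \<Rightarrow> 'a pmf"
  assumes "prob_space M" and meas: "\<And>n. X n \<in> M \<rightarrow>\<^sub>M count_space UNIV"
    and law: "\<And>n. distr M (count_space UNIV) (X n) = measure_pmf (p n)"
    and summable: "summable (\<lambda>n. measure_pmf.prob (p n) (B n))"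
  shows "AE \<omega> in M. eventually (\<lambda>n. X n \<omega> \<notin> B n) sequentially"
proof -
  interpret prob_space M by fact
  define C where "C n = X n -` B n \<inter> space M" for n
  have C: "C n \<in> sets M" for n unfolding C_def by (rule measurable_sets[OF meas]) simp
  have "measure M (C n) = measure_pmf.prob (p n) (B n)" for n
    unfolding C_def using measure_distr[OF meas, of "B n", symmetric] law by simp
  then have "AE \<omega> in M. eventually (\<lambda>n. \<omega> \<in> space M - C n) sequentially"
    using summable C by (intro borel_cantelli_AE1) (auto simp: emeasure_eq_measure)
  then show ?thesis by (rule AE_mp) (auto simp: C_def elim: eventually_mono)
qed

lemma positive_matrix_bounds:
  fixes S :: "nat \<Rightarrow> nat \<Rightarrow> real"
  assumes "0 < k" and "\<And>c d. c < k \<Longrightarrow> d < k \<Longrightarrow> 0 < S c d"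
  obtains smin smax where "0 < smin" and "\<And>c d. c < k \<Longrightarrow> d < k \<Longrightarrow> smin \<le> S c d \<and> S c d \<le> smax"
proof
  define entries where "entries = (\<lambda>(c, d). S c d) ` ({..<k} \<times> {..<k})"
  have "finite entries" "entries \<noteq> {}" using assms(1) by (auto simp: entries_def)
  then show "0 < Min entries" using Min_in assms(2) by (force simp: entries_def)
  show "Min entries \<le> S c d \<and> S c d \<le> Max entries" if "c < k" "d < k" for c d
  proof -
    have "S c d \<in> entries" using that by (auto simp: entries_def)
    then show ?thesis using \<open>finite entries\<close> by simp
  qed
qed

lemma full_support_pmf_lower_bound:
  fixes \<pi> :: "nat pmf"
  assumes "set_pmf \<pi> = {0..<k}" and "0 < k"
  obtains \<beta> :: real where "0 < \<beta>" "\<beta> \<le> 1" "\<And>a. a < k \<Longrightarrow> 2 * \<beta> \<le> pmf \<pi> a"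
proof
  define q where "q = Min (pmf \<pi> ` {0..<k})"
  have q_le: "q \<le> pmf \<pi> a" if "a < k" for a unfolding q_def using that by (intro Min_le) auto
  show "0 < q / 2" using Min_in[of "pmf \<pi> ` {0..<k}"] assms by (auto simp: q_def pmf_positive)
  show "q / 2 \<le> 1" using q_le[OF assms(2)] pmf_le_1[of \<pi> 0] by simp
  show "2 * (q / 2) \<le> pmf \<pi> a" if "a < k" for a using q_le[OF that] by simp
qed

lemma AE_eventually_Xfun_diff_less:
  fixes M :: "'w measure" and \<pi> :: "nat pmf" and S :: "nat \<Rightarrow> nat \<Rightarrow> real" and \<rho> \<alpha>s :: "nat \<Rightarrow> real"
    and Zs :: "nat \<Rightarrow> 'w \<Rightarrow> (nat \<Rightarrow> nat)" and As :: "nat \<Rightarrow> 'w \<Rightarrow> (nat \<Rightarrow> nat \<Rightarrow> bool)" and \<delta> :: real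
  assumes M: "prob_space M" and k: "0 < k" and \<pi>: "set_pmf \<pi> = {0..<k}"
    and sym: "\<forall>a<k. \<forall>b<k. S a b = S b a" and pos: "\<forall>a<k. \<forall>b<k. S a b > 0"
    and \<rho>: "\<rho> \<longlonglongrightarrow> 0" and n\<rho>: "filterlim (\<lambda>n. real n * \<rho> n) at_top sequentially"
    and meas: "\<forall>n. (\<lambda>\<omega>. (Zs n \<omega>, As n \<omega>)) \<in> M \<rightarrow>\<^sub>M count_space UNIV"
    and law: "\<forall>n. distr M (count_space UNIV) (\<lambda>\<omega>. (Zs n \<omega>, As n \<omega>))
              = measure_pmf (sbm_pmf \<pi> (\<lambda>a b. \<rho> n * S a b) n)"
    and \<alpha>n\<rho>: "filterlim (\<lambda>n. \<alpha>s n * (real n * \<rho> n)) at_top sequentially" and \<delta>: "0 < \<delta>"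
  shows "AE \<omega> in M. eventually (\<lambda>n. \<forall>e \<in> Fset k n (\<alpha>s n).
           \<bar>Xfun k n (\<lambda>a b. \<rho> n * S a b) (As n \<omega>) e (Zs n \<omega>)
            - Xfun k n (\<lambda>a b. \<rho> n * S a b) (As n \<omega>) (Zs n \<omega>) (Zs n \<omega>)\<bar> < \<delta> * \<rho> n) sequentially"
proof -
  obtain smin smax where smin: "0 < smin" and S: "\<And>c d. c < k \<Longrightarrow> d < k \<Longrightarrow> smin \<le> S c d \<and> S c d \<le> smax"
    using positive_matrix_bounds[OF k] pos by metis
  have smax: "0 < smax" using S[OF k k] smin by linarith
  obtain \<beta> where \<beta>: "0 < \<beta>" "\<beta> \<le> 1" "\<And>a. a < k \<Longrightarrow> 2 * \<beta> \<le> pmf \<pi> a"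
    using full_support_pmf_lower_bound[OF \<pi> k] by metis
  define C where "C = \<bar>ln smin\<bar> + \<bar>ln smax\<bar> + ln 2"
  obtain \<gamma> where \<gamma>: "0 < \<gamma>" and \<gamma>_small: "real k ^ 2 * C * \<gamma> + real k ^ 2 * (2 / smin) * \<gamma>\<^sup>2 < \<delta>"
    using exists_pos_linear_plus_square_less[OF \<delta>] by blast
  define a where "a n = min (\<alpha>s n) \<beta>" for n
  have regime: "eventually (\<lambda>n. 0 < \<rho> n \<and> \<rho> n * smax \<le> 1/2 \<and> 2 \<le> a n * real n
      \<and> real n * (ln k + 1) \<le> \<gamma>\<^sup>2 * \<rho> n * (real n)\<^sup>2 / (8 * smax)
      \<and> real n * (ln k + 1) \<le> \<gamma> * \<rho> n * real n * (a n * real n - 1) / 4) sequentially"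
    unfolding a_def by (rule eventually_sbm_regime[OF \<rho> n\<rho> \<alpha>n\<rho> \<beta>(1) \<gamma> smax])
  have "AE \<omega> in M. eventually (\<lambda>n. (Zs n \<omega>, As n \<omega>) \<notin>
      {x. \<not> sbm_typical k n (\<lambda>c d. \<rho> n * S c d) (a n) \<beta> (\<gamma> * \<rho> n * real n) x}) sequentially"
    using M meas law summable_prob_not_sbm_typical[OF k \<pi> \<beta> S _ smin \<gamma> regime] sym
    by (intro AE_eventually_notin_of_summable) auto
  then show ?thesis
  proof (rule AE_mp, intro AE_I2 impI)
    fix \<omega> assume "eventually (\<lambda>n. (Zs n \<omega>, As n \<omega>) \<notin>
      {x. \<not> sbm_typical k n (\<lambda>c d. \<rho> n * S c d) (a n) \<beta> (\<gamma> * \<rho> n * real n) x}) sequentially"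
    with regime show "eventually (\<lambda>n. \<forall>e \<in> Fset k n (\<alpha>s n).
           \<bar>Xfun k n (\<lambda>a b. \<rho> n * S a b) (As n \<omega>) e (Zs n \<omega>)
            - Xfun k n (\<lambda>a b. \<rho> n * S a b) (As n \<omega>) (Zs n \<omega>) (Zs n \<omega>)\<bar> < \<delta> * \<rho> n) sequentially"
    proof eventually_elim
      case (elim n)
      have "0 < n" using elim by (cases "n = 0") auto
      have "(real k ^ 2 * C * \<gamma> + real k ^ 2 * (2 / smin) * \<gamma>\<^sup>2) * \<rho> n < \<delta> * \<rho> n"
        using \<gamma>_small elim by (intro mult_strict_right_mono) auto
      then have "real k ^ 2 * \<rho> n * (C * \<gamma> + 2 * \<gamma>\<^sup>2 / smin) < \<delta> * \<rho> n"
        by (simp add: algebra_simps)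
      moreover have "\<bar>Xfun k n (\<lambda>a b. \<rho> n * S a b) (As n \<omega>) e (Zs n \<omega>)
            - Xfun k n (\<lambda>a b. \<rho> n * S a b) (As n \<omega>) (Zs n \<omega>) (Zs n \<omega>)\<bar>
          \<le> real k ^ 2 * \<rho> n * (C * \<gamma> + 2 * \<gamma>\<^sup>2 / smin)" if "e \<in> Fset k n (\<alpha>s n)" for e
        unfolding C_def using elim that \<open>0 < n\<close> smin S \<gamma>
        by (intro Xfun_diff_le_if_sbm_typical[where \<alpha> = "\<alpha>s n" and a = "a n" and \<beta> = \<beta>]) (auto simp: a_def)
      ultimately show ?case by fastforce
    qed
  qed
qed

lemma filterlim_mult_at_top_if_div_square_less:
  fixes \<alpha> x :: "nat \<Rightarrow> real" and c :: real
  assumes x: "filterlim x at_top sequentially" and c: "0 < c" and \<alpha>: "\<And>n. 0 < \<alpha> n"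
    and bound: "eventually (\<lambda>n. c / (\<alpha> n)\<^sup>2 < x n) sequentially"
  shows "filterlim (\<lambda>n. \<alpha> n * x n) at_top sequentially"
proof -
  have x_nonneg: "eventually (\<lambda>n. 0 \<le> x n) sequentially"
    using x by (simp add: filterlim_at_top)
  have "eventually (\<lambda>n. c * x n \<le> (\<alpha> n * x n)\<^sup>2) sequentially"
    using bound x_nonneg
  proof eventually_elim
    case (elim n)
    then have "c \<le> (\<alpha> n)\<^sup>2 * x n" using \<alpha>[of n] by (simp add: pos_divide_less_eq mult.commute)
    then have "c * x n \<le> ((\<alpha> n)\<^sup>2 * x n) * x n" using elim by (intro mult_right_mono) auto
    then show ?case by (simp add: power2_eq_square mult_ac)
  qed
  then have "filterlim (\<lambda>n. (\<alpha> n * x n)\<^sup>2) at_top sequentially"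
    using filterlim_tendsto_pos_mult_at_top[OF tendsto_const c x] by (rule filterlim_at_top_mono[rotated])
  then have "filterlim (\<lambda>n. sqrt ((\<alpha> n * x n)\<^sup>2)) at_top sequentially"
    by (rule filterlim_compose[OF sqrt_at_top])
  moreover have "eventually (\<lambda>n. sqrt ((\<alpha> n * x n)\<^sup>2) \<le> \<alpha> n * x n) sequentially"
    using x_nonneg by eventually_elim (simp add: \<alpha> less_imp_le)
  ultimately show ?thesis by (rule filterlim_at_top_mono)
qed

theorem theorem5:
  fixes M :: "'w measure"
    and k :: nat and \<pi> :: "nat pmf" and S :: "nat \<Rightarrow> nat \<Rightarrow> real" and \<rho> :: "nat \<Rightarrow> real"
    and Zs :: "nat \<Rightarrow> 'w \<Rightarrow> (nat \<Rightarrow> nat)" and As :: "nat \<Rightarrow> 'w \<Rightarrow> (nat \<Rightarrow> nat \<Rightarrow> bool)"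
  assumes "prob_space M"
    and "k \<ge> 2"
    and "set_pmf \<pi> = {0..<k}"
    and "\<forall>a<k. \<forall>b<k. S a b = S b a"
    and "\<forall>a<k. \<forall>b<k. S a b > 0"
    and "\<forall>a<k. \<forall>b<k. a \<noteq> b \<longrightarrow> (\<exists>c<k. S c a \<noteq> S c b)"
    and "\<rho> \<longlonglongrightarrow> 0"
    and "filterlim (\<lambda>n. real n * \<rho> n) at_top sequentially"
    and "\<forall>n. (\<lambda>\<omega>. (Zs n \<omega>, As n \<omega>)) \<in> M \<rightarrow>\<^sub>M count_space UNIV"
    and "\<forall>n. distr M (count_space UNIV) (\<lambda>\<omega>. (Zs n \<omega>, As n \<omega>))
              = measure_pmf (sbm_pmf \<pi> (\<lambda>a b. \<rho> n * S a b) n)"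
  shows
    "(\<forall>\<alpha> \<delta>. 0 < \<alpha> \<longrightarrow> \<alpha> < Min (pmf \<pi> ` {0..<k}) \<longrightarrow> 0 < \<delta> \<longrightarrow>
        (AE \<omega> in M. eventually (\<lambda>n.
           \<forall>e. (is_ML_est k \<alpha> n (As n \<omega>) e \<or> is_ICL_est k \<alpha> n (As n \<omega>) e) \<longrightarrow>
             \<bar>Xfun k n (\<lambda>a b. \<rho> n * S a b) (As n \<omega>) e (Zs n \<omega>)
              - Xfun k n (\<lambda>a b. \<rho> n * S a b) (As n \<omega>) (Zs n \<omega>) (Zs n \<omega>)\<bar> < \<delta> * \<rho> n)
         sequentially))
     \<and>
     (\<forall>\<alpha>s :: nat \<Rightarrow> real. \<forall>\<delta>. (\<forall>n. 0 < \<alpha>s n \<and> \<alpha>s n < Min (pmf \<pi> ` {0..<k})) \<longrightarrow>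
        antimono \<alpha>s \<longrightarrow> 0 < \<delta> \<longrightarrow>
        eventually (\<lambda>n. real n * \<rho> n >
            4 * Max {S a b | a b. a < k \<and> b < k} / (\<alpha>s n ^ 2 * \<delta> ^ 2)) sequentially \<longrightarrow>
        (AE \<omega> in M. eventually (\<lambda>n.
           \<forall>e. (is_ML_est k (\<alpha>s n) n (As n \<omega>) e \<or> is_ICL_est k (\<alpha>s n) n (As n \<omega>) e) \<longrightarrow>
             \<bar>Xfun k n (\<lambda>a b. \<rho> n * S a b) (As n \<omega>) e (Zs n \<omega>)
              - Xfun k n (\<lambda>a b. \<rho> n * S a b) (As n \<omega>) (Zs n \<omega>) (Zs n \<omega>)\<bar> < \<delta> * \<rho> n)
         sequentially))"
proof -
  have k: "0 < k" using assms(2) by simp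
  have close: "AE \<omega> in M. eventually (\<lambda>n.
      \<forall>e. (is_ML_est k (\<alpha>s n) n (As n \<omega>) e \<or> is_ICL_est k (\<alpha>s n) n (As n \<omega>) e) \<longrightarrow>
        \<bar>Xfun k n (\<lambda>a b. \<rho> n * S a b) (As n \<omega>) e (Zs n \<omega>)
         - Xfun k n (\<lambda>a b. \<rho> n * S a b) (As n \<omega>) (Zs n \<omega>) (Zs n \<omega>)\<bar> < \<delta> * \<rho> n) sequentially"
    if "filterlim (\<lambda>n. \<alpha>s n * (real n * \<rho> n)) at_top sequentially" "0 < \<delta>" for \<alpha>s \<delta>
    using AE_eventually_Xfun_diff_less[OF assms(1) k assms(3,4,5,7,8,9,10) that]
    by (rule AE_mp) (auto intro!: AE_I2 elim!: eventually_mono simp: is_ML_est_def is_ICL_est_def)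
  have "{S a b | a b. a < k \<and> b < k} = (\<lambda>(a, b). S a b) ` ({..<k} \<times> {..<k})" by auto
  then have smax: "0 < Max {S a b | a b. a < k \<and> b < k}"
    using assms(5) k by (intro order.strict_trans2[OF _ Max_ge[of _ "S 0 0"]]) auto
  show ?thesis
    apply (intro conjI allI impI)
    subgoal for \<alpha> \<delta>
      using filterlim_tendsto_pos_mult_at_top[OF tendsto_const _ assms(8), of \<alpha>] by (intro close) auto
    subgoal for \<alpha>s \<delta>
      using smax
      by (intro close filterlim_mult_at_top_if_div_square_less[OF assms(8), where c = "4 * Max {S a b | a b. a < k \<and> b < k} / \<delta>\<^sup>2"])
        (auto simp: divide_divide_eq_left mult.commute)
    done
qed
end
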